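(* Let $1\le m\le n$ and $\mu=2^m1^{n-m}$. Then $\ker(\eta)\cong S^\mu$ as $S_{n+m}$-modules, and $\operatorname{im}(\eta)=\ker(\alpha)$, where $\alpha:\tilde M^\mu\to S^\mu$ is the map $[t]\mapsto\varepsilon_t$.
   Context: All vector spaces are over $\mathbb C$. For a partition $\lambda$ of $N$, a tableau of shape $\lambda$ is a filling of the Young diagram of $\lambda$ using each element of $[N]$ exactly once; $C_t$ is its column stabilizer. The row tabloid $\{t\}$ is the usual class of $t$ up to permuting entries within rows, and the polytabloid is $\varepsilon_t=\sum_{\beta\in C_t}\operatorname{sgn}(\beta)\{\beta t\}$; the Specht module $S^\lambda$ is the span of all $\varepsilon_t$. The column tabloid $[t]$ is the class of $t$ in the space $\tilde M^\lambda$, defined as the $\mathbb C$-span of symbols $[t]$ modulo the relations $[t]=\operatorname{sgn}(\beta)[\beta t]$ for $\beta\in C_t$; $S_N$ acts by $\sigma[t]=[\sigma t]$. The map $\alpha:\tilde M^\lambda\to S^\lambda$, $[t]\mapsto\varepsilon_t$, is a well-defined surjective $S_N$-homomorphism. For a column $c$ and $1\le \ell\le$ (length of column $c+1$), let $\pi^{\ell}_{c,1}([t])$ be the sum, over all entries $x$ of column $c$ of $t$, of the column tabloids $[t']$ where $t'$ is obtained from $t$ by swapping $x$ with the $\ell$-th entry (from the top) of column $c+1$. For $\mu=2^m1^{n-m}$ (columns of lengths $n$ and $m$), $\eta:\tilde M^\mu\to\tilde M^\mu$ is the linear map $\eta([t])=m[t]-\sum_{j=1}^m\pi^j_{1,1}([t])$.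 *)

theory Defs
  imports Complex_Main "HOL-Combinatorics.Combinatorics"
begin

text \<open>A shape is given by its list of column lengths (left to right).
 A tableau is a list of columns (each a list of entries read top to bottom);
 it is a tableau of shape cols if the column lengths are cols and the entries
 are exactly 1..N (N = sum of the column lengths), each used once.\<close>

definition tabs :: "nat list \<Rightarrow> nat list list set" where
  "tabs cols = {T. map length T = cols \<and> distinct (concat T) \<and> set (concat T) = {1..sum_list cols}}"

definition tab_act :: "(nat \<Rightarrow> nat) \<Rightarrow> nat list list \<Rightarrow> nat list list" where
  "tab_act s T = map (map s) T"

definition colstab :: "nat list list \<Rightarrow> (nat \<Rightarrow> nat) set" where
  "colstab T = {b. b permutes {1..sum_list (map length T)} \<and>
                   (\<forall>c<length T. b ` set (T!c) = set (T!c))}"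

text \<open>Row index (0-based) of entry x in T; the row tabloid of T is rowof T
 (a function from entries to rows; two tableaux have the same row tabloid iff
 these functions agree).\<close>
definition rowof :: "nat list list \<Rightarrow> nat \<Rightarrow> nat" where
  "rowof T x = (if x \<in> set (concat T)
     then (THE i. \<exists>c<length T. i < length (T!c) \<and> T!c!i = x) else 0)"

definition cspan :: "('a \<Rightarrow> complex) set \<Rightarrow> ('a \<Rightarrow> complex) set" where
  "cspan A = {v. \<exists>F c. finite F \<and> F \<subseteq> A \<and> v = (\<lambda>s. \<Sum>a\<in>F. c a * a s)}"

text \<open>Row tabloid module M^lambda: functions from row tabloids to complex numbers,
 basis vector of a tabloid r is the indicator of r. Polytabloid epsilon_t.\<close>
definition polytab :: "nat list list \<Rightarrow> (nat \<Rightarrow> nat) \<Rightarrow> complex" where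
  "polytab T = (\<lambda>r. \<Sum>b\<in>colstab T. of_int (sign b) * (if r = rowof (tab_act b T) then 1 else 0))"

definition Specht :: "nat list \<Rightarrow> ((nat \<Rightarrow> nat) \<Rightarrow> complex) set" where
  "Specht cols = cspan {polytab T | T. T \<in> tabs cols}"

definition actM :: "(nat \<Rightarrow> nat) \<Rightarrow> ((nat \<Rightarrow> nat) \<Rightarrow> complex) \<Rightarrow> ((nat \<Rightarrow> nat) \<Rightarrow> complex)" where
  "actM s g = (\<lambda>r. g (r \<circ> s))"

text \<open>Column tabloid module: free vector space Fsp on tableaux (functions on
 tableaux) modulo the relation subspace Rel; [t] is the class of delta t.\<close>
definition delta :: "nat list list \<Rightarrow> nat list list \<Rightarrow> complex" where
  "delta T = (\<lambda>S. if S = T then 1 else 0)"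

definition Fsp :: "nat list \<Rightarrow> (nat list list \<Rightarrow> complex) set" where
  "Fsp cols = {f. \<forall>T. T \<notin> tabs cols \<longrightarrow> f T = 0}"

definition Rel :: "nat list \<Rightarrow> (nat list list \<Rightarrow> complex) set" where
  "Rel cols = cspan {(\<lambda>S. delta T S - of_int (sign b) * delta (tab_act b T) S) | T b.
                      T \<in> tabs cols \<and> b \<in> colstab T}"

definition actF :: "(nat \<Rightarrow> nat) \<Rightarrow> (nat list list \<Rightarrow> complex) \<Rightarrow> (nat list list \<Rightarrow> complex)" where
  "actF s f = (\<lambda>S. f (tab_act (inv s) S))"

text \<open>pi^l_{c,1}([t]) with c, l 1-based as in the paper.\<close>
definition piop :: "nat \<Rightarrow> nat \<Rightarrow> nat list list \<Rightarrow> nat list list \<Rightarrow> complex" where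
  "piop c l T = (\<lambda>S. \<Sum>x\<in>set (T!(c-1)). delta (tab_act (transpose x (T!c!(l-1))) T) S)"

text \<open>eta on the free space (linear extension of the formula on basis elements),
 shape mu = 2^m 1^(n-m), i.e. columns [n, m].\<close>
definition eta :: "nat \<Rightarrow> nat \<Rightarrow> (nat list list \<Rightarrow> complex) \<Rightarrow> (nat list list \<Rightarrow> complex)" where
  "eta n m f = (\<lambda>S. \<Sum>T\<in>tabs [n, m]. f T * (of_nat m * delta T S - (\<Sum>j\<in>{1..m}. piop 1 j T S)))"

definition alpha :: "nat list \<Rightarrow> (nat list list \<Rightarrow> complex) \<Rightarrow> ((nat \<Rightarrow> nat) \<Rightarrow> complex)" where
  "alpha cols f = (\<lambda>r. \<Sum>T\<in>tabs cols. f T * polytab T r)"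

end

theory Submission
  imports Defs "HOL-Library.Function_Algebras" "HOL-Library.Disjoint_Sets"
begin

text \<open>Write the column tabloid module of shape \<open>\<mu> = [n, m]\<close> in the basis \<open>e\<^sub>B\<close> indexed by the
  \<open>m\<close>-subsets \<open>B\<close> of \<open>{1..n + m}\<close>, where \<open>[T] = \<plusminus>e\<^sub>B\<close> for \<open>B\<close> the set of entries of the second
  column of \<open>T\<close>. In these coordinates \<open>\<eta>\<close> is the Gram operator \<open>D\<^sup>* D\<close> of the map \<open>D\<close> sending a
  function \<open>v\<close> on \<open>m\<close>-subsets to \<open>C \<mapsto> \<Sum>\<^sub>B\<^sub>\<supseteq>\<^sub>C v B\<close> on \<open>(m - 1)\<close>-subsets. Being positive
  semidefinite, \<open>\<eta>\<close> has range meeting its kernel trivially, so every vector is an element of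
  \<open>ker \<eta>\<close> plus an element of \<open>im \<eta>\<close>.

  The map \<open>\<alpha>\<close> kills \<open>im \<eta>\<close> by a Garnir relation: for \<open>m \<le> n\<close> the \<open>n + 1\<close> entries outside an
  \<open>(m - 1)\<close>-set cannot lie in distinct rows. An element of \<open>ker \<eta>\<close> is a harmonic function
  (\<open>D v = 0\<close>), and \<open>\<alpha>\<close> evaluated at the row tabloid of a tableau whose first \<open>m\<close> rows are
  disjoint pairs is an alternating sum of \<open>v\<close> over the \<open>2\<^sup>m\<close> ways of splitting the pairs.
  A harmonic function all of whose alternating sums vanish is zero (induction on \<open>m\<close>), so
  \<open>\<alpha>\<close> is injective on \<open>ker \<eta>\<close>; it maps \<open>ker \<eta>\<close> onto the Specht module and
  \<open>ker \<alpha> = im \<eta> + Rel\<close>.\<close>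

interpretation fun_vs: vector_space "\<lambda>c (f :: 'a \<Rightarrow> complex) x. c * f x"
  by unfold_locales (auto simp: plus_fun_def algebra_simps)

lemma (in vector_space) image_range_eq_range:
  assumes lin: "Vector_Spaces.linear scale scale H" and fin: "finite E" and spanned: "range H \<subseteq> span E"
    and ker: "\<And>v. H (H v) = 0 \<Longrightarrow> H v = 0"
  shows "H ` range H = range H"
proof -
  interpret H: Vector_Spaces.linear scale scale H by (fact lin)
  have sub: "subspace (range H)"
    using H.subspace_image[OF subspace_UNIV] by simp
  obtain B where B: "B \<subseteq> range H" "independent B" "range H \<subseteq> span B"
    using basis_exists by blast
  have finB: "finite B"
    using independent_span_bound[OF fin B(2)] B(1) spanned by blast
  have spanB: "span B = range H"
    using B sub by (metis span_subspace)
  have inj: "inj_on H (range H)"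
    using H.inj_on_iff_eq_0[OF sub] ker by auto
  have indep: "independent (H ` B)"
    using H.independent_injective_image[OF B(2)] inj spanB by simp
  have card: "card (H ` B) = card B"
    using inj B(1) by (metis card_image inj_on_subset)
  have "range H \<subseteq> span (H ` B)"
  proof (rule ccontr)
    assume "\<not> range H \<subseteq> span (H ` B)"
    then obtain x where x: "x \<in> range H" "x \<notin> span (H ` B)" by blast
    have "independent (insert x (H ` B))"
      using independent_insertI[OF x(2) indep] .
    moreover have "insert x (H ` B) \<subseteq> span B"
      using x spanB by auto
    ultimately have "card (insert x (H ` B)) \<le> card B"
      using independent_span_bound[OF finB] by blast
    moreover have "x \<notin> H ` B"
      using x(2) span_base by blast
    ultimately show False
      using finB card by simp
  qed
  then have "range H \<subseteq> H ` range H"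
    using H.span_image spanB by simp
  then show ?thesis by auto
qed

lemma sum_fun_apply: "(\<Sum>i\<in>I. f i) x = (\<Sum>i\<in>I. f i x)"
  by (induction I rule: infinite_finite_induct) auto

section \<open>Alternating sums over pairs\<close>

definition flat_pairs :: "('a \<times> 'a) list \<Rightarrow> 'a list" where
  "flat_pairs ps = concat (map (\<lambda>(p, q). [p, q]) ps)"

lemma flat_pairs_Nil [simp]: "flat_pairs [] = []"
  and flat_pairs_Cons [simp]: "flat_pairs ((p, q) # ps) = p # q # flat_pairs ps"
  and flat_pairs_snoc: "flat_pairs (ps @ [(p, q)]) = flat_pairs ps @ [p, q]"
  by (simp_all add: flat_pairs_def)

lemma set_flat_pairs: "set (flat_pairs ps) = fst ` set ps \<union> snd ` set ps"
  by (force simp: flat_pairs_def)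

lemma length_flat_pairs: "length (flat_pairs ps) = 2 * length ps"
  by (induction ps) auto

lemma nth_flat_pairs:
  assumes "i < length ps"
  shows "flat_pairs ps ! (2 * i) = fst (ps ! i) \<and> flat_pairs ps ! (2 * i + 1) = snd (ps ! i)"
  using assms
proof (induction ps arbitrary: i)
  case (Cons pq ps)
  obtain p q where pq: "pq = (p, q)" by fastforce
  show ?case
  proof (cases i)
    case (Suc k)
    then have "2 * i = Suc (Suc (2 * k))" by simp
    then show ?thesis
      using Cons Suc pq by simp
  qed (simp add: pq)
qed simp

lemma distinct_flat_pairsD:
  assumes "distinct (flat_pairs ps)" "i < length ps" "j < length ps"
  shows "fst (ps ! i) \<noteq> snd (ps ! j)"
    and "fst (ps ! i) = fst (ps ! j) \<Longrightarrow> i = j"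
    and "snd (ps ! i) = snd (ps ! j) \<Longrightarrow> i = j"
proof -
  let ?xs = "flat_pairs ps"
  have len: "2 * i + 1 < length ?xs" "2 * j + 1 < length ?xs"
    using assms(2,3) by (simp_all add: length_flat_pairs)
  have idx: "a = b" if "a < length ?xs" "b < length ?xs" "?xs ! a = ?xs ! b" for a b
    using nth_eq_iff_index_eq[OF assms(1) that(1,2)] that(3) by simp
  note nth = nth_flat_pairs[OF assms(2)] nth_flat_pairs[OF assms(3)]
  show "fst (ps ! i) \<noteq> snd (ps ! j)"
  proof
    assume "fst (ps ! i) = snd (ps ! j)"
    then have "2 * i = 2 * j + 1"
      using idx[of "2 * i" "2 * j + 1"] len nth by simp
    then show False by presburger
  qed
  show "i = j" if "fst (ps ! i) = fst (ps ! j)"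
    using idx[of "2 * i" "2 * j"] len nth that by simp
  show "i = j" if "snd (ps ! i) = snd (ps ! j)"
    using idx[of "2 * i + 1" "2 * j + 1"] len nth that by simp
qed

definition pair_entry :: "('a \<times> 'a) list \<Rightarrow> nat set \<Rightarrow> nat \<Rightarrow> 'a" where
  "pair_entry ps S i = (if i \<in> S then snd (ps ! i) else fst (ps ! i))"

definition pick :: "('a \<times> 'a) list \<Rightarrow> nat set \<Rightarrow> 'a set" where
  "pick ps S = pair_entry ps S ` {..<length ps}"

definition alt_sum :: "('a set \<Rightarrow> 'b::comm_ring_1) \<Rightarrow> ('a \<times> 'a) list \<Rightarrow> 'b" where
  "alt_sum v ps = (\<Sum>S\<in>Pow {..<length ps}. (-1) ^ card S * v (pick ps S))"

lemma pick_snoc_eq: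
  "pick (ps @ [(p, q)]) S = insert (if length ps \<in> S then q else p) (pair_entry ps S ` {..<length ps})"
  by (auto simp: pick_def pair_entry_def lessThan_Suc nth_append intro!: image_cong)

lemma pick_snoc:
  assumes "S \<subseteq> {..<length ps}"
  shows "pick (ps @ [(p, q)]) S = insert p (pick ps S)"
    and "pick (ps @ [(p, q)]) (insert (length ps) S) = insert q (pick ps S)"
  using assms unfolding pick_snoc_eq by (auto simp: pick_def pair_entry_def)

lemma alt_sum_Nil: "alt_sum v [] = v {}"
  by (simp add: alt_sum_def pick_def)

lemma alt_sum_snoc:
  "alt_sum v (ps @ [(p, q)]) = alt_sum (\<lambda>C. v (insert p C) - v (insert q C)) ps"
proof -
  let ?k = "length ps" and ?t = "\<lambda>S. (-1) ^ card S * v (pick (ps @ [(p, q)]) S)"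
  have inj: "inj_on (insert ?k) (Pow {..<?k})"
    by (rule inj_onI) (metis Diff_insert_absorb PowD lessThan_iff less_irrefl subsetD)
  have "alt_sum v (ps @ [(p, q)]) = sum ?t (Pow {..<?k}) + sum ?t (insert ?k ` Pow {..<?k})"
    unfolding alt_sum_def by (auto simp: lessThan_Suc Pow_insert intro: sum.union_disjoint)
  also have "sum ?t (Pow {..<?k}) = (\<Sum>S\<in>Pow {..<?k}. (-1) ^ card S * v (insert p (pick ps S)))"
    by (auto simp: pick_snoc intro!: sum.cong)
  also have "sum ?t (insert ?k ` Pow {..<?k})
      = (\<Sum>S\<in>Pow {..<?k}. - ((-1) ^ card S * v (insert q (pick ps S))))"
    by (auto simp: sum.reindex[OF inj] pick_snoc finite_subset card_insert_if intro!: sum.cong)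
  finally show ?thesis
    by (simp add: alt_sum_def algebra_simps flip: sum.distrib)
qed

section \<open>Harmonic functions on subsets of fixed size\<close>

definition harmonic :: "'a set \<Rightarrow> nat \<Rightarrow> ('a set \<Rightarrow> 'b::comm_monoid_add) \<Rightarrow> bool" where
  "harmonic X k v \<longleftrightarrow> (\<forall>C. C \<subseteq> X \<longrightarrow> card C + 1 = k \<longrightarrow> (\<Sum>x\<in>X - C. v (insert x C)) = 0)"

lemma eq_if_exchange_invariant:
  assumes fin: "finite X"
    and exch: "\<And>p q C. p \<in> X \<Longrightarrow> q \<in> X \<Longrightarrow> p \<noteq> q \<Longrightarrow> C \<subseteq> X - {p, q} \<Longrightarrow> card C + 1 = k
              \<Longrightarrow> v (insert p C) = v (insert q C)"
  shows "B \<subseteq> X \<Longrightarrow> B' \<subseteq> X \<Longrightarrow> card B = k \<Longrightarrow> card B' = k \<Longrightarrow> v B = v B'"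
proof (induction "card (B - B')" arbitrary: B rule: less_induct)
  case less
  have fB: "finite B" "finite B'" using less.prems fin finite_subset by blast+
  show ?case
  proof (cases "B = B'")
    case False
    have "\<not> B \<subseteq> B'" "\<not> B' \<subseteq> B"
      using False fB less.prems(3,4) by (metis card_subset_eq)+
    then obtain y x where y: "y \<in> B" "y \<notin> B'" and x: "x \<in> B'" "x \<notin> B"
      by blast
    define B'' where "B'' = insert x (B - {y})"
    have cB: "card B > 0" using y fB by (auto simp: card_gt_0_iff)
    have "v B = v B''"
    proof -
      have "v (insert y (B - {y})) = v (insert x (B - {y}))"
        by (rule exch) (use x y less.prems fB cB in \<open>auto simp: card_Diff_singleton\<close>)
      then show ?thesis using y by (simp add: B''_def insert_absorb)
    qed
    also have "v B'' = v B'"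
    proof (rule less.hyps)
      have "B'' - B' = (B - B') - {y}" using x y by (auto simp: B''_def)
      then show "card (B'' - B') < card (B - B')"
        using y fB by (metis DiffI card_Diff1_less finite_Diff)
      show "card B'' = k" using less.prems x y fB cB by (simp add: B''_def card_Diff_singleton)
    qed (use less.prems x in \<open>auto simp: B''_def\<close>)
    finally show ?thesis .
  qed simp
qed

lemma harmonic_exchange_diff:
  fixes v :: "'a set \<Rightarrow> 'b::ab_group_add"
  assumes fin: "finite X" and harm: "harmonic X (Suc k) v"
    and pq: "p \<in> X" "q \<in> X" "p \<noteq> q"
  shows "harmonic (X - {p, q}) k (\<lambda>C. v (insert p C) - v (insert q C))"
  unfolding harmonic_def
proof (intro allI impI)
  fix D assume D: "D \<subseteq> X - {p, q}" and cD: "card D + 1 = k"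
  have fD: "finite D" using D fin finite_subset by blast
  \<comment> \<open>harmonicity at \<open>insert a D\<close>, with the summand for \<open>x = b\<close> split off\<close>
  have side: "v (insert b (insert a D)) + (\<Sum>x\<in>X - {p, q} - D. v (insert x (insert a D))) = 0"
    if ab: "{a, b} = {p, q}" "a \<noteq> b" for a b
  proof -
    have "X - insert a D = insert b (X - {p, q} - D)"
      using D pq ab by auto
    moreover have "(\<Sum>x\<in>X - insert a D. v (insert x (insert a D))) = 0"
    proof -
      have "a \<in> X" "a \<notin> D" using ab pq D by auto
      then have "insert a D \<subseteq> X" "card (insert a D) + 1 = Suc k"
        using D cD fD by auto
      then show ?thesis using harm unfolding harmonic_def by blast
    qed
    moreover have "b \<notin> X - {p, q} - D"
      using ab by auto
    ultimately show ?thesis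
      using fin by simp
  qed
  have swap: "(\<Sum>x\<in>X - {p, q} - D. v (insert a (insert x D)))
      = (\<Sum>x\<in>X - {p, q} - D. v (insert x (insert a D)))" for a
    by (intro sum.cong refl arg_cong[where f=v]) auto
  have "insert q (insert p D) = insert p (insert q D)" "{q, p} = {p, q}"
    by auto
  then show "(\<Sum>x\<in>X - {p, q} - D. v (insert p (insert x D)) - v (insert q (insert x D))) = 0"
    using side[of p q] side[of q p] pq(3)
    by (simp add: sum_subtractf swap eq_neg_iff_add_eq_0[symmetric])
qed

lemma harmonic_eq_0_if_constant:
  fixes v :: "'a set \<Rightarrow> 'b::{idom, ring_char_0}"
  assumes fin: "finite X" and harm: "harmonic X k v"
    and const: "\<And>B B'. B \<subseteq> X \<Longrightarrow> B' \<subseteq> X \<Longrightarrow> card B = k \<Longrightarrow> card B' = k \<Longrightarrow> v B = v B'"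
    and B: "B \<subseteq> X" "card B = k" "k > 0"
  shows "v B = 0"
proof -
  have fB: "finite B" using B(1) fin by (rule finite_subset)
  obtain y where y: "y \<in> B" using B(2,3) by (metis card.empty ex_in_conv less_irrefl)
  define C where "C = B - {y}"
  have C: "C \<subseteq> X" "card C + 1 = k" "finite C"
    using B y fB by (auto simp: C_def card_Diff_singleton)
  have "v (insert x C) = v B" if "x \<in> X - C" for x
  proof (rule const)
    show "card (insert x C) = k" using that C by simp
  qed (use that C B in auto)
  then have "(\<Sum>x\<in>X - C. v (insert x C)) = of_nat (card (X - C)) * v B"
    by simp
  moreover have "card (X - C) > 0"
    using y B fin by (auto simp: C_def card_gt_0_iff)
  ultimately show ?thesis
    using harm C unfolding harmonic_def by simp
qed

theorem harmonic_eq_0_if_alt_sums_eq_0: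
  fixes v :: "'a set \<Rightarrow> 'b::{idom, ring_char_0}"
  assumes "finite X" and "harmonic X k v"
    and "\<And>ps. length ps = k \<Longrightarrow> distinct (flat_pairs ps) \<Longrightarrow> set (flat_pairs ps) \<subseteq> X
          \<Longrightarrow> alt_sum v ps = 0"
    and "B \<subseteq> X" "card B = k"
  shows "v B = 0"
  using assms
proof (induction k arbitrary: X v B)
  case 0
  then have "B = {}"
    using finite_subset by fastforce
  then show ?case
    using "0.prems"(3)[of "[]"] by (simp add: alt_sum_Nil)
next
  case (Suc k)
  \<comment> \<open>the exchange differences satisfy the hypotheses one level lower\<close>
  have exch: "v (insert p C) = v (insert q C)"
    if pq: "p \<in> X" "q \<in> X" "p \<noteq> q" and C: "C \<subseteq> X - {p, q}" "card C + 1 = Suc k" for p q C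
  proof -
    have "v (insert p C) - v (insert q C) = 0"
    proof (rule Suc.IH[where X="X - {p, q}" and v="\<lambda>C. v (insert p C) - v (insert q C)"])
      show "harmonic (X - {p, q}) k (\<lambda>C. v (insert p C) - v (insert q C))"
        by (rule harmonic_exchange_diff) (use Suc.prems pq in auto)
      show "alt_sum (\<lambda>C. v (insert p C) - v (insert q C)) ps = 0"
        if "length ps = k" "distinct (flat_pairs ps)" "set (flat_pairs ps) \<subseteq> X - {p, q}" for ps
        using Suc.prems(3)[of "ps @ [(p, q)]"] that pq by (auto simp: flat_pairs_snoc alt_sum_snoc)
    qed (use Suc.prems C in auto)
    then show ?thesis by simp
  qed
  show ?case
  proof (rule harmonic_eq_0_if_constant[OF Suc.prems(1,2)])
    show "v B1 = v B2" if "B1 \<subseteq> X" "B2 \<subseteq> X" "card B1 = Suc k" "card B2 = Suc k" for B1 B2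
      by (rule eq_if_exchange_invariant[OF Suc.prems(1), where k="Suc k"]) (use exch that in auto)
  qed (use Suc.prems in auto)
qed

section \<open>Superset sums and their Gram operator\<close>

definition ksubsets :: "'a set \<Rightarrow> nat \<Rightarrow> 'a set set" where
  "ksubsets X k = {B. B \<subseteq> X \<and> card B = k}"

definition sup_sum :: "'a set \<Rightarrow> nat \<Rightarrow> ('a set \<Rightarrow> complex) \<Rightarrow> 'a set \<Rightarrow> complex" where
  "sup_sum X k v C = (\<Sum>B\<in>{B \<in> ksubsets X k. C \<subseteq> B}. v B)"

definition sub_sum :: "'a set \<Rightarrow> nat \<Rightarrow> ('a set \<Rightarrow> complex) \<Rightarrow> 'a set \<Rightarrow> complex" where
  "sub_sum X k u B = (if B \<in> ksubsets X k then \<Sum>C\<in>{C. C \<subseteq> B \<and> card C + 1 = k}. u C else 0)"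

definition gram :: "'a set \<Rightarrow> nat \<Rightarrow> ('a set \<Rightarrow> complex) \<Rightarrow> 'a set \<Rightarrow> complex" where
  "gram X k v = sub_sum X k (sup_sum X k v)"

lemma finite_ksubsets: "finite X \<Longrightarrow> finite (ksubsets X k)"
  by (rule finite_subset[of _ "Pow X"]) (auto simp: ksubsets_def)

lemma sup_sum_eq_sum_insert:
  assumes "finite X" "C \<subseteq> X" "card C + 1 = k"
  shows "sup_sum X k v C = (\<Sum>x\<in>X - C. v (insert x C))"
proof -
  have fC: "finite C" using assms finite_subset by blast
  have "{B \<in> ksubsets X k. C \<subseteq> B} = (\<lambda>x. insert x C) ` (X - C)"
  proof (intro equalityI subsetI)
    fix B assume B: "B \<in> {B \<in> ksubsets X k. C \<subseteq> B}"
    have "card (B - C) = 1"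
      using B assms fC by (auto simp: ksubsets_def card_Diff_subset)
    then obtain x where "B - C = {x}" by (meson card_1_singletonE)
    then show "B \<in> (\<lambda>x. insert x C) ` (X - C)" using B by (auto simp: ksubsets_def)
  qed (use assms fC in \<open>auto simp: ksubsets_def\<close>)
  moreover have "inj_on (\<lambda>x. insert x C) (X - C)"
    by (auto intro!: inj_onI)
  ultimately show ?thesis
    by (simp add: sup_sum_def sum.reindex)
qed

lemma sub_sum_adjoint:
  assumes "finite X"
  shows "(\<Sum>B\<in>ksubsets X k. cnj (a B) * sub_sum X k u B)
       = (\<Sum>C\<in>{C. C \<subseteq> X \<and> card C + 1 = k}. u C * cnj (sup_sum X k a C))"
proof -
  have fin: "finite {C. C \<subseteq> X \<and> card C + 1 = k}"
    by (rule finite_subset[of _ "Pow X"]) (use assms in auto)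
  have "(\<Sum>B\<in>ksubsets X k. cnj (a B) * sub_sum X k u B)
      = (\<Sum>B\<in>ksubsets X k. \<Sum>C\<in>{C. C \<subseteq> X \<and> card C + 1 = k \<and> C \<subseteq> B}. cnj (a B) * u C)"
    by (intro sum.cong refl) (auto simp: sub_sum_def ksubsets_def sum_distrib_left intro!: sum.cong)
  also have "\<dots> = (\<Sum>C\<in>{C. C \<subseteq> X \<and> card C + 1 = k}. \<Sum>B\<in>{B \<in> ksubsets X k. C \<subseteq> B}. cnj (a B) * u C)"
    using sum.swap_restrict[OF finite_ksubsets[OF assms] fin, of "\<lambda>B C. cnj (a B) * u C" "\<lambda>B C. C \<subseteq> B"]
    by simp
  also have "\<dots> = (\<Sum>C\<in>{C. C \<subseteq> X \<and> card C + 1 = k}. u C * cnj (sup_sum X k a C))"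
    by (simp add: sup_sum_def sum_distrib_left sum_distrib_right mult.commute)
  finally show ?thesis .
qed

lemma sum_mult_cnj_eq_0_iff:
  assumes "finite A"
  shows "(\<Sum>x\<in>A. z x * cnj (z x)) = 0 \<longleftrightarrow> (\<forall>x\<in>A. z x = 0)"
proof -
  have "(\<Sum>x\<in>A. z x * cnj (z x)) = complex_of_real (\<Sum>x\<in>A. (norm (z x))\<^sup>2)"
    by (simp add: of_real_sum flip: complex_norm_square)
  moreover have "(\<Sum>x\<in>A. (norm (z x))\<^sup>2) = 0 \<longleftrightarrow> (\<forall>x\<in>A. z x = 0)"
    using assms by (simp add: sum_nonneg_eq_0_iff)
  ultimately show ?thesis
    by (metis of_real_eq_0_iff)
qed

text \<open>Since \<open>sub_sum\<close> is adjoint to \<open>sup_sum\<close>, \<open>\<langle>v, gram v\<rangle> = \<parallel>sup_sum v\<parallel>\<^sup>2\<close>.\<close>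

lemma sup_sum_eq_0_if_gram_eq_0:
  assumes "finite X" and "gram X k v = (\<lambda>_. 0)" and "C \<subseteq> X" "card C + 1 = k"
  shows "sup_sum X k v C = 0"
proof -
  have "(\<Sum>C\<in>{C. C \<subseteq> X \<and> card C + 1 = k}. sup_sum X k v C * cnj (sup_sum X k v C)) = 0"
    using sub_sum_adjoint[OF assms(1), of v k "sup_sum X k v"] assms(2) by (simp add: gram_def)
  moreover have "finite {C. C \<subseteq> X \<and> card C + 1 = k}"
    by (rule finite_subset[of _ "Pow X"]) (use assms(1) in auto)
  ultimately show ?thesis
    using assms(3,4) by (simp add: sum_mult_cnj_eq_0_iff)
qed

lemma harmonic_if_gram_eq_0:
  assumes "finite X" and "gram X k v = (\<lambda>_. 0)"
  shows "harmonic X k v"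
  unfolding harmonic_def
  using sup_sum_eq_0_if_gram_eq_0[OF assms] sup_sum_eq_sum_insert[OF assms(1)] by simp

lemma gram_eq_0_if_gram_gram_eq_0:
  assumes fin: "finite X" and "gram X k (gram X k v) = (\<lambda>_. 0)"
  shows "gram X k v = (\<lambda>_. 0)"
proof -
  let ?w = "gram X k v"
  have "\<forall>C. C \<subseteq> X \<and> card C + 1 = k \<longrightarrow> sup_sum X k ?w C = 0"
    using sup_sum_eq_0_if_gram_eq_0[OF fin assms(2)] by blast
  then have "(\<Sum>B\<in>ksubsets X k. cnj (?w B) * ?w B) = 0"
    using sub_sum_adjoint[OF fin, of ?w k "sup_sum X k v"] by (simp add: gram_def)
  then have "\<forall>B\<in>ksubsets X k. ?w B = 0"
    using sum_mult_cnj_eq_0_iff[OF finite_ksubsets[OF fin], of ?w k] by (simp add: mult.commute)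
  then show ?thesis
    by (auto simp: gram_def sub_sum_def)
qed

lemma gram_linear: "Vector_Spaces.linear (\<lambda>c f x. c * f x) (\<lambda>c f x. c * f x) (gram X k)"
  by unfold_locales
    (auto simp: gram_def sub_sum_def sup_sum_def plus_fun_def sum.distrib sum_distrib_left)

lemma gram_eq_gram_gram:
  assumes "finite X"
  shows "\<exists>w. gram X k v = gram X k (gram X k w)"
proof -
  let ?E = "(\<lambda>B C. if C = B then 1 else 0 :: complex) ` ksubsets X k"
  have spanned: "range (gram X k) \<subseteq> fun_vs.span ?E"
  proof
    fix w assume "w \<in> range (gram X k)"
    then have w0: "w C = 0" if "C \<notin> ksubsets X k" for C
      using that by (auto simp: gram_def sub_sum_def)
    have expand: "(\<Sum>B\<in>ksubsets X k. w B * (if C = B then 1 else 0)) = w C" for C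
    proof -
      have "(\<Sum>B\<in>ksubsets X k. w B * (if C = B then 1 else 0))
          = (\<Sum>B\<in>ksubsets X k. if C = B then w B else 0)"
        by (rule sum.cong) auto
      then show ?thesis
        using w0 finite_ksubsets[OF assms] by (simp add: sum.delta')
    qed
    have "w = (\<Sum>B\<in>ksubsets X k. (\<lambda>C. w B * (if C = B then 1 else 0)))"
      by (simp add: fun_eq_iff sum_fun_apply expand)
    also have "\<dots> \<in> fun_vs.span ?E"
      by (intro fun_vs.span_sum fun_vs.span_scale fun_vs.span_base) auto
    finally show "w \<in> fun_vs.span ?E" .
  qed
  have "gram X k ` range (gram X k) = range (gram X k)"
    by (rule fun_vs.image_range_eq_range[OF gram_linear _ spanned])
       (use assms gram_eq_0_if_gram_gram_eq_0 in \<open>auto simp: finite_ksubsets zero_fun_def\<close>)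
  then have "gram X k v \<in> gram X k ` range (gram X k)"
    by simp
  then show ?thesis
    by auto
qed

lemma gram_outside: "B \<notin> ksubsets X k \<Longrightarrow> gram X k v B = 0"
  by (simp add: gram_def sub_sum_def)

lemma gram_cong: "(\<And>B. B \<in> ksubsets X k \<Longrightarrow> v B = w B) \<Longrightarrow> gram X k v = gram X k w"
  unfolding gram_def sub_sum_def sup_sum_def by (intro ext sum.cong if_cong) auto

lemma gram_diff: "gram X k (\<lambda>B. v B - w B) = (\<lambda>B. gram X k v B - gram X k w B)"
  unfolding gram_def sub_sum_def sup_sum_def by (simp add: sum_subtractf fun_eq_iff)

lemma card_remove_one_subset:
  assumes "B \<in> ksubsets X k" and "finite X"
  shows "card {y \<in> B. B - {y} \<subseteq> B'} = card {C. C \<subseteq> B' \<and> card C + 1 = k \<and> C \<subseteq> B}"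
proof (rule bij_betw_same_card[of "\<lambda>y. B - {y}"], rule bij_betwI')
  have B: "finite B" "card B = k"
    using assms rev_finite_subset by (auto simp: ksubsets_def)
  show "B - {y} \<in> {C. C \<subseteq> B' \<and> card C + 1 = k \<and> C \<subseteq> B}" if "y \<in> {y \<in> B. B - {y} \<subseteq> B'}" for y
  proof -
    have "card B > 0" using that B(1) card_gt_0_iff by blast
    then show ?thesis using that B by (simp add: card_Diff_singleton)
  qed
  show "\<exists>y\<in>{y \<in> B. B - {y} \<subseteq> B'}. C = B - {y}" if C: "C \<in> {C. C \<subseteq> B' \<and> card C + 1 = k \<and> C \<subseteq> B}" for C
  proof -
    have "card (B - C) = card B - card C"
      using C B(1) by (simp add: card_Diff_subset rev_finite_subset)
    then have "card (B - C) = 1"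
      using C B(2) by auto
    then obtain y where "B - C = {y}"
      by (meson card_1_singletonE)
    then show ?thesis using C by auto
  qed
qed auto

lemma gram_eq_sum_card:
  assumes "finite X" and "B' \<in> ksubsets X k"
  shows "gram X k v B' = (\<Sum>B\<in>ksubsets X k. v B * of_nat (card {y \<in> B. B - {y} \<subseteq> B'}))"
proof -
  let ?Cs = "{C. C \<subseteq> B' \<and> card C + 1 = k}"
  have "finite B'"
    using assms rev_finite_subset by (auto simp: ksubsets_def)
  then have fin: "finite ?Cs"
    by (simp add: finite_subset[of _ "Pow B'"])
  have "gram X k v B' = (\<Sum>C\<in>?Cs. \<Sum>B\<in>{B \<in> ksubsets X k. C \<subseteq> B}. v B)"
    using assms(2) by (simp add: gram_def sub_sum_def sup_sum_def)
  also have "\<dots> = (\<Sum>B\<in>ksubsets X k. \<Sum>C\<in>{C \<in> ?Cs. C \<subseteq> B}. v B)"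
    by (rule sum.swap_restrict[OF fin finite_ksubsets[OF assms(1)]])
  also have "\<dots> = (\<Sum>B\<in>ksubsets X k. v B * of_nat (card {y \<in> B. B - {y} \<subseteq> B'}))"
    by (rule sum.cong) (simp_all add: card_remove_one_subset[OF _ assms(1)] mult.commute)
  finally show ?thesis .
qed

section \<open>Tableaux\<close>

lemma tabsD:
  assumes "T \<in> tabs cols"
  shows "map length T = cols" "distinct (concat T)" "set (concat T) = {1..sum_list cols}"
    "length (concat T) = sum_list cols"
  using assms by (auto simp: tabs_def length_concat)

lemma finite_tabs: "finite (tabs cols)"
proof -
  let ?N = "sum_list cols"
  let ?A = "{xs. set xs \<subseteq> {1..?N} \<and> length xs \<le> ?N}"
  have "tabs cols \<subseteq> {T. set T \<subseteq> ?A \<and> length T \<le> length cols}"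
  proof
    fix T assume T: "T \<in> tabs cols"
    have "length xs \<le> ?N" if "xs \<in> set T" for xs
      using that tabsD(4)[OF T] by (metis elem_le_sum_list in_set_conv_nth length_concat length_map nth_map)
    then show "T \<in> {T. set T \<subseteq> ?A \<and> length T \<le> length cols}"
      using tabsD(1,3)[OF T] by fastforce
  qed
  moreover have "finite {T. set T \<subseteq> ?A \<and> length T \<le> length cols}"
    by (intro finite_lists_length_le) (simp add: finite_lists_length_le)
  ultimately show ?thesis by (rule finite_subset)
qed

lemma tab_eq_if_concat_eq:
  "map length T1 = map length T2 \<Longrightarrow> concat T1 = concat T2 \<Longrightarrow> T1 = T2"
proof (induction T1 arbitrary: T2)
  case (Cons a T1)
  then obtain b T2' where "T2 = b # T2'" "length a = length b" "map length T1 = map length T2'"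
    by (cases T2) auto
  then show ?case using Cons by simp
qed simp

lemma concat_tab_act: "concat (tab_act b T) = map b (concat T)"
  by (simp add: tab_act_def map_concat)

lemma map_length_tab_act [simp]: "map length (tab_act b T) = map length T"
  by (simp add: tab_act_def comp_def)

lemma length_tab_act [simp]: "length (tab_act b T) = length T"
  by (simp add: tab_act_def)

lemma nth_tab_act: "c < length T \<Longrightarrow> tab_act b T ! c = map b (T ! c)"
  by (simp add: tab_act_def)

lemma tab_act_comp: "tab_act s (tab_act t T) = tab_act (s \<circ> t) T"
  by (simp add: tab_act_def)

lemma tab_act_id [simp]: "tab_act id T = T"
  by (simp add: tab_act_def)

lemma tab_act_tabs:
  assumes b: "b permutes {1..sum_list cols}" and T: "T \<in> tabs cols"
  shows "tab_act b T \<in> tabs cols"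
proof -
  have "inj_on b (set (concat T))"
    using b permutes_inj by (metis injD inj_onI)
  then have "distinct (concat (tab_act b T))" "set (concat (tab_act b T)) = {1..sum_list cols}"
    using tabsD[OF T] permutes_image[OF b] by (simp_all add: concat_tab_act distinct_map)
  then show ?thesis
    using tabsD(1)[OF T] by (simp add: tabs_def)
qed

lemma tab_act_inj_on_permutes:
  assumes T: "T \<in> tabs cols" and b: "b permutes {1..sum_list cols}" and b': "b' permutes {1..sum_list cols}"
    and eq: "tab_act b T = tab_act b' T"
  shows "b = b'"
proof
  fix x
  show "b x = b' x"
  proof (cases "x \<in> {1..sum_list cols}")
    case True
    moreover have "map b (concat T) = map b' (concat T)"
      using eq by (metis concat_tab_act)
    ultimately show ?thesis
      using tabsD(3)[OF T] by (metis map_eq_conv)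
  qed (simp add: permutes_not_in[OF b] permutes_not_in[OF b'])
qed

text \<open>The sign of the column reading word fixes an orientation of each tableau.\<close>

definition reading_perm :: "nat list list \<Rightarrow> nat \<Rightarrow> nat" where
  "reading_perm T = (\<lambda>k. if k \<in> {1..length (concat T)} then concat T ! (k - 1) else k)"

definition tab_sign :: "nat list list \<Rightarrow> int" where
  "tab_sign T = sign (reading_perm T)"

lemma reading_perm_permutes:
  assumes T: "T \<in> tabs cols"
  shows "reading_perm T permutes {1..sum_list cols}"
proof (rule bij_imp_permutes)
  let ?N = "sum_list cols"
  have "bij_betw (\<lambda>k. k - 1) {1..?N} {..<?N}"
    by (rule bij_betw_byWitness[where f'=Suc]) auto
  moreover have "bij_betw ((!) (concat T)) {..<?N} {1..?N}"
    by (rule bij_betw_nth) (use tabsD[OF T] in auto)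
  ultimately have "bij_betw ((!) (concat T) \<circ> (\<lambda>k. k - 1)) {1..?N} {1..?N}"
    by (rule bij_betw_trans)
  then show "bij_betw (reading_perm T) {1..?N} {1..?N}"
    by (rule bij_betw_cong[THEN iffD1, rotated]) (auto simp: reading_perm_def tabsD(4)[OF T])
qed (auto simp: reading_perm_def tabsD(4)[OF T])

lemma reading_perm_tab_act:
  assumes b: "b permutes {1..sum_list cols}" and T: "T \<in> tabs cols"
  shows "reading_perm (tab_act b T) = b \<circ> reading_perm T"
proof
  fix k
  show "reading_perm (tab_act b T) k = (b \<circ> reading_perm T) k"
    using permutes_not_in[OF b, of k] tabsD(4)[OF T]
    by (auto simp: reading_perm_def concat_tab_act)
qed

lemma tab_sign_tab_act:
  assumes b: "b permutes {1..sum_list cols}" and T: "T \<in> tabs cols"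
  shows "tab_sign (tab_act b T) = sign b * tab_sign T"
proof -
  have "permutation b" "permutation (reading_perm T)"
    using b reading_perm_permutes[OF T] by (auto intro: permutes_imp_permutation)
  then show ?thesis
    by (simp add: tab_sign_def reading_perm_tab_act[OF b T] sign_compose)
qed

lemma tab_sign_mult_self [simp]: "tab_sign T * tab_sign T = 1"
  by (simp add: tab_sign_def)

lemma tab_sign_neq_0: "tab_sign T \<noteq> 0"
  by (simp add: tab_sign_def sign_def)

lemma cspan_zero: "(\<lambda>s. 0) \<in> cspan A"
  unfolding cspan_def by (rule CollectI, rule exI[of _ "{}"]) auto

lemma cspan_base: "a \<in> A \<Longrightarrow> a \<in> cspan A"
  unfolding cspan_def by (rule CollectI, rule exI[of _ "{a}"], rule exI[of _ "\<lambda>_. 1"]) auto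

lemma cspan_elim:
  assumes "v \<in> cspan A"
  obtains F c where "finite F" "F \<subseteq> A" "v = (\<lambda>s. \<Sum>a\<in>F. c a * a s)"
  using assms unfolding cspan_def by blast

lemma cspan_add:
  assumes "v \<in> cspan A" "w \<in> cspan A"
  shows "(\<lambda>s. v s + w s) \<in> cspan A"
proof -
  obtain F c where F: "finite F" "F \<subseteq> A" "v = (\<lambda>s. \<Sum>a\<in>F. c a * a s)"
    using assms(1) by (rule cspan_elim)
  obtain G d where G: "finite G" "G \<subseteq> A" "w = (\<lambda>s. \<Sum>a\<in>G. d a * a s)"
    using assms(2) by (rule cspan_elim)
  define e where "e a = (if a \<in> F then c a else 0) + (if a \<in> G then d a else 0)" for a
  have "(\<Sum>a\<in>F \<union> G. (if a \<in> F then c a else 0) * a s) = (\<Sum>a\<in>F. c a * a s)"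
    and "(\<Sum>a\<in>F \<union> G. (if a \<in> G then d a else 0) * a s) = (\<Sum>a\<in>G. d a * a s)" for s
    by (rule sum.mono_neutral_cong_right; use F G in auto)+
  then have "(\<lambda>s. v s + w s) = (\<lambda>s. \<Sum>a\<in>F \<union> G. e a * a s)"
    by (simp add: F(3) G(3) e_def distrib_right sum.distrib)
  then show ?thesis
    unfolding cspan_def using F G by (intro CollectI exI[of _ "F \<union> G"] exI[of _ e]) auto
qed

lemma cspan_scale:
  assumes "v \<in> cspan A"
  shows "(\<lambda>s. k * v s) \<in> cspan A"
proof -
  obtain F c where F: "finite F" "F \<subseteq> A" "v = (\<lambda>s. \<Sum>a\<in>F. c a * a s)"
    using assms by (rule cspan_elim)
  have "(\<lambda>s. k * v s) = (\<lambda>s. \<Sum>a\<in>F. (k * c a) * a s)"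
    using F(3) by (simp add: sum_distrib_left mult.assoc)
  then show ?thesis
    unfolding cspan_def using F by (intro CollectI exI[of _ F] exI[of _ "\<lambda>a. k * c a"]) auto
qed

lemma cspan_sum:
  assumes "finite I" "\<And>i. i \<in> I \<Longrightarrow> g i \<in> cspan A"
  shows "(\<lambda>s. \<Sum>i\<in>I. g i s) \<in> cspan A"
  using assms
proof (induction I rule: finite_induct)
  case empty then show ?case by (simp add: cspan_zero)
next
  case (insert x F)
  then show ?case using cspan_add[of "g x" A "\<lambda>s. \<Sum>i\<in>F. g i s"] by simp
qed

lemma Fsp_eq_sum_delta:
  assumes "f \<in> Fsp cols"
  shows "f = (\<lambda>S. \<Sum>T\<in>tabs cols. f T * delta T S)"
proof
  fix S
  show "f S = (\<Sum>T\<in>tabs cols. f T * delta T S)"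
    using assms finite_tabs unfolding Fsp_def delta_def
    by (cases "S \<in> tabs cols") (auto simp: if_distrib cong: if_cong)
qed

lemma Fsp_diff: "f \<in> Fsp cols \<Longrightarrow> g \<in> Fsp cols \<Longrightarrow> (\<lambda>S. f S - g S) \<in> Fsp cols"
  and Fsp_add: "f \<in> Fsp cols \<Longrightarrow> g \<in> Fsp cols \<Longrightarrow> (\<lambda>S. f S + g S) \<in> Fsp cols"
  by (simp_all add: Fsp_def)

lemma colstab_permutes: "b \<in> colstab T \<Longrightarrow> T \<in> tabs cols \<Longrightarrow> b permutes {1..sum_list cols}"
  unfolding colstab_def using tabsD(1)[of T cols] by simp

lemma set_tab_act_colstab:
  "b \<in> colstab T \<Longrightarrow> c < length T \<Longrightarrow> set (tab_act b T ! c) = set (T ! c)"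
  unfolding colstab_def by (simp add: nth_tab_act)

lemma tab_act_colstab_tabs: "b \<in> colstab T \<Longrightarrow> T \<in> tabs cols \<Longrightarrow> tab_act b T \<in> tabs cols"
  by (rule tab_act_tabs[OF colstab_permutes])

lemma sign_colstab:
  assumes "b \<in> colstab T" "T \<in> tabs cols"
  shows "sign b = tab_sign T * tab_sign (tab_act b T)"
  using tab_sign_tab_act[OF colstab_permutes[OF assms] assms(2)] by (simp add: mult.left_commute)

lemma tabs2D:
  assumes "T \<in> tabs [n, m]"
  shows "T = [T ! 0, T ! 1]" "length T = 2" "length (T ! 0) = n" "length (T ! 1) = m"
    "distinct (T ! 0)" "distinct (T ! 1)" "set (T ! 0) \<inter> set (T ! 1) = {}"
    "set (T ! 0) \<union> set (T ! 1) = {1..n + m}" "set (T ! 0) = {1..n + m} - set (T ! 1)"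
    "set (T ! 1) \<subseteq> {1..n + m}" "card (set (T ! 1)) = m"
proof -
  obtain a b where T: "T = [a, b]"
    using tabsD(1)[OF assms] by (cases T; cases "tl T") auto
  then show "T = [T ! 0, T ! 1]" "length T = 2" by simp_all
  show "length (T ! 0) = n" "length (T ! 1) = m" "distinct (T ! 0)" "distinct (T ! 1)"
    "set (T ! 0) \<inter> set (T ! 1) = {}" "set (T ! 0) \<union> set (T ! 1) = {1..n + m}"
    "set (T ! 0) = {1..n + m} - set (T ! 1)" "set (T ! 1) \<subseteq> {1..n + m}" "card (set (T ! 1)) = m"
    using tabsD[OF assms] T by (auto simp: distinct_card)
qed

lemma tabs2I:
  assumes "length a = n" "length b = m" "distinct (a @ b)" "set a \<union> set b = {1..n + m}"
  shows "[a, b] \<in> tabs [n, m]"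
  using assms unfolding tabs_def by auto

lemma tab_act_tabs2: "s permutes {1..n + m} \<Longrightarrow> T \<in> tabs [n, m] \<Longrightarrow> tab_act s T \<in> tabs [n, m]"
  using tab_act_tabs[of s "[n, m]"] by simp

lemma tab_sign_tab_act2:
  "s permutes {1..n + m} \<Longrightarrow> T \<in> tabs [n, m] \<Longrightarrow> tab_sign (tab_act s T) = sign s * tab_sign T"
  using tab_sign_tab_act[of s "[n, m]"] by simp

lemma set_tab_act_nth:
  "T \<in> tabs [n, m] \<Longrightarrow> c < 2 \<Longrightarrow> set (tab_act s T ! c) = s ` set (T ! c)"
  using tabs2D(2) by (simp add: nth_tab_act)

lemma exists_colstab_tab_act:
  assumes T: "T \<in> tabs [n, m]" and T': "T' \<in> tabs [n, m]" and eq: "set (T ! 1) = set (T' ! 1)"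
  shows "\<exists>b\<in>colstab T. tab_act b T = T'"
proof -
  let ?r = "reading_perm T" and ?r' = "reading_perm T'"
  have r: "?r permutes {1..n + m}" "?r' permutes {1..n + m}"
    using reading_perm_permutes[OF T] reading_perm_permutes[OF T'] by auto
  define b where "b = ?r' \<circ> inv ?r"
  have b: "b permutes {1..n + m}"
    unfolding b_def by (rule permutes_compose[OF permutes_inv[OF r(1)] r(2)])
  have len: "length (concat T) = n + m" "length (concat T') = n + m"
    using tabsD(4)[OF T] tabsD(4)[OF T'] by simp_all
  have "concat (tab_act b T) = concat T'"
  proof (rule nth_equalityI)
    show "length (concat (tab_act b T)) = length (concat T')"
      using len by (simp add: concat_tab_act)
    fix i assume "i < length (concat (tab_act b T))"
    then have i: "i < n + m" using len by (simp add: concat_tab_act)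
    then have "?r (Suc i) = concat T ! i" "?r' (Suc i) = concat T' ! i"
      using len by (simp_all add: reading_perm_def)
    moreover have "inv ?r (?r (Suc i)) = Suc i"
      using permutes_inverses(2)[OF r(1)] by simp
    ultimately show "concat (tab_act b T) ! i = concat T' ! i"
      using i len by (simp add: concat_tab_act b_def)
  qed
  then have act: "tab_act b T = T'"
    using tabsD(1)[OF T] tabsD(1)[OF T'] by (intro tab_eq_if_concat_eq) simp_all
  have col1: "b ` set (T ! 1) = set (T ! 1)"
    using act eq set_tab_act_nth[OF T, of 1 b] by simp
  have col0: "b ` set (T ! 0) = set (T ! 0)"
    using act eq set_tab_act_nth[OF T, of 0 b] tabs2D(9)[OF T] tabs2D(9)[OF T'] by simp
  have "b ` set (T ! c) = set (T ! c)" if c: "c < 2" for c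
  proof -
    consider "c = 0" | "c = 1" using less_2_cases[OF c] by auto
    then show ?thesis by cases (use col0 col1 in simp_all)
  qed
  then have "b \<in> colstab T"
    using b tabsD(1)[OF T] tabs2D(2)[OF T] by (simp add: colstab_def)
  then show ?thesis using act by blast
qed

lemma tabs2_pos_unique:
  assumes T: "T \<in> tabs [n, m]" and c: "c < 2" "c' < 2"
    and i: "i < length (T ! c)" "i' < length (T ! c')" and eq: "T ! c ! i = T ! c' ! i'"
  shows "c = c' \<and> i = i'"
  using tabs2D(5,6,7)[OF T] c i eq
  by (auto simp: less_2_cases_iff nth_eq_iff_index_eq disjoint_iff dest: nth_mem)

lemma tabs2_obtain_pos:
  assumes T: "T \<in> tabs [n, m]" and x: "x \<in> {1..n + m}"
  obtains c i where "c < 2" "i < length (T ! c)" "T ! c ! i = x"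
proof -
  have "x \<in> set (T ! 0) \<or> x \<in> set (T ! 1)"
    using tabs2D(8)[OF T] x by auto
  then show ?thesis
  proof
    assume "x \<in> set (T ! 0)"
    then obtain i where "i < length (T ! 0)" "T ! 0 ! i = x"
      by (metis in_set_conv_nth)
    then show ?thesis using that[of 0 i] by simp
  next
    assume "x \<in> set (T ! 1)"
    then obtain i where "i < length (T ! 1)" "T ! 1 ! i = x"
      by (metis in_set_conv_nth)
    then show ?thesis using that[of 1 i] by simp
  qed
qed

lemma rowof_nth:
  assumes T: "T \<in> tabs [n, m]" and c: "c < 2" and i: "i < length (T ! c)"
  shows "rowof T (T ! c ! i) = i"
proof -
  have "(THE i'. \<exists>c'<length T. i' < length (T ! c') \<and> T ! c' ! i' = T ! c ! i) = i"
    using tabs2_pos_unique[OF T _ c] c i tabs2D(2)[OF T] by (intro the_equality) auto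
  moreover have "T ! c ! i \<in> set (concat T)"
    using c i tabs2D(2)[OF T] by (auto intro!: bexI[of _ "T ! c"])
  ultimately show ?thesis
    by (simp add: rowof_def)
qed

lemma same_rowof_imp_same_row:
  assumes T: "T \<in> tabs [n, m]" and T': "T' \<in> tabs [n, m]" and r: "rowof T' = rowof T"
    and c: "c < 2" "i < length (T ! c)"
  shows "\<exists>c'<2. i < length (T' ! c') \<and> T' ! c' ! i = T ! c ! i"
proof -
  have "T ! c ! i \<in> set (T ! c)"
    using c(2) by (rule nth_mem)
  moreover have "c = 0 \<or> c = 1"
    using c(1) by linarith
  ultimately have x: "T ! c ! i \<in> {1..n + m}"
    using tabs2D(8)[OF T] by blast
  obtain c' k where ck: "c' < 2" "k < length (T' ! c')" "T' ! c' ! k = T ! c ! i"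
    using tabs2_obtain_pos[OF T' x] .
  then have "k = i"
    using rowof_nth[OF T' ck(1,2)] rowof_nth[OF T c] r by simp
  then show ?thesis
    using ck by blast
qed

lemma rowof_less:
  assumes T: "T \<in> tabs [n, m]" and mn: "m \<le> n" and x: "x \<in> {1..n + m}"
  shows "rowof T x < n"
proof -
  obtain c i where ci: "c < 2" "i < length (T ! c)" "T ! c ! i = x"
    using tabs2_obtain_pos[OF T x] .
  then have "i < n"
    using tabs2D(3,4)[OF T] mn by (auto simp: less_2_cases_iff)
  then show ?thesis
    using rowof_nth[OF T ci(1,2)] ci(3) by simp
qed

lemma rowof_tab_act:
  assumes T: "T \<in> tabs [n, m]" and s: "s permutes {1..n + m}"
  shows "rowof (tab_act s T) (s y) = rowof T y"
proof (cases "y \<in> {1..n + m}")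
  case True
  obtain c i where ci: "c < 2" "i < length (T ! c)" "T ! c ! i = y"
    using tabs2_obtain_pos[OF T True] .
  have sT: "tab_act s T \<in> tabs [n, m]"
    by (rule tab_act_tabs2[OF s T])
  have "tab_act s T ! c ! i = s y" "i < length (tab_act s T ! c)"
    using ci tabs2D(2)[OF T] by (auto simp: nth_tab_act)
  then show ?thesis
    using rowof_nth[OF sT ci(1)] rowof_nth[OF T ci(1,2)] ci(3) by metis
next
  case False
  have "tab_act s T \<in> tabs [n, m]"
    by (rule tab_act_tabs2[OF s T])
  then have "y \<notin> set (concat T)" "y \<notin> set (concat (tab_act s T))"
    using tabsD(3)[OF T] tabsD(3) False by auto
  then show ?thesis
    using permutes_not_in[OF s False] by (simp add: rowof_def)
qed

lemma rowof_tab_act_eq_comp: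
  assumes T: "T \<in> tabs [n, m]" and s: "s permutes {1..n + m}"
  shows "rowof (tab_act s T) = rowof T \<circ> inv s"
proof
  fix x
  show "rowof (tab_act s T) x = (rowof T \<circ> inv s) x"
    using rowof_tab_act[OF T s, of "inv s x"] permutes_inverses(1)[OF s] by simp
qed

section \<open>Coordinates in the column tabloid module\<close>

text \<open>In the column tabloid module of shape \<open>[n, m]\<close> one has \<open>[T] = tab_sign T \<cdot> e\<^sub>B\<close>
  with \<open>B = set (T ! 1)\<close>, and the \<open>e\<^sub>B\<close> for the \<open>m\<close>-subsets \<open>B\<close> of \<open>{1..n + m}\<close> form a basis.
  \<open>col_coeff n m f B\<close> is the \<open>e\<^sub>B\<close>-coordinate of the class of \<open>f\<close>.\<close>

definition col_coeff :: "nat \<Rightarrow> nat \<Rightarrow> (nat list list \<Rightarrow> complex) \<Rightarrow> nat set \<Rightarrow> complex" where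
  "col_coeff n m f B = (\<Sum>T\<in>{T \<in> tabs [n, m]. set (T ! 1) = B}. f T * of_int (tab_sign T))"

lemma col_coeff_sum: "col_coeff n m (\<lambda>S. \<Sum>i\<in>I. g i S) B = (\<Sum>i\<in>I. col_coeff n m (g i) B)"
  unfolding col_coeff_def sum_distrib_right by (rule sum.swap)

lemma col_coeff_diff: "col_coeff n m (\<lambda>S. f S - g S) B = col_coeff n m f B - col_coeff n m g B"
  by (simp add: col_coeff_def left_diff_distrib sum_subtractf)

lemma col_coeff_scale: "col_coeff n m (\<lambda>S. c * f S) B = c * col_coeff n m f B"
  by (simp add: col_coeff_def sum_distrib_left mult.assoc)

lemma col_coeff_delta:
  "col_coeff n m (delta U) B = (if U \<in> tabs [n, m] \<and> set (U ! 1) = B then of_int (tab_sign U) else 0)"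
proof -
  have "col_coeff n m (delta U) B
      = (\<Sum>T\<in>{T \<in> tabs [n, m]. set (T ! 1) = B}. if U = T then of_int (tab_sign T) else 0)"
    unfolding col_coeff_def delta_def by (rule sum.cong) auto
  then show ?thesis
    by (simp add: finite_tabs)
qed

lemma col_coeff_outside: "B \<notin> ksubsets {1..n + m} m \<Longrightarrow> col_coeff n m f B = 0"
  unfolding col_coeff_def using tabs2D(10,11) by (intro sum.neutral) (auto simp: ksubsets_def)

lemma sum_tabs_group_col:
  "(\<Sum>T\<in>tabs [n, m]. f T * of_int (tab_sign T) * h (set (T ! 1)))
   = (\<Sum>B\<in>ksubsets {1..n + m} m. col_coeff n m f B * h B)"
proof -
  have "(\<Sum>T\<in>tabs [n, m]. f T * of_int (tab_sign T) * h (set (T ! 1)))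
      = (\<Sum>B\<in>ksubsets {1..n + m} m. \<Sum>T\<in>{T \<in> tabs [n, m]. set (T ! 1) = B}.
           f T * of_int (tab_sign T) * h (set (T ! 1)))"
    by (rule sum.group[symmetric])
       (use tabs2D(10,11) in \<open>auto simp: finite_tabs finite_ksubsets ksubsets_def\<close>)
  also have "\<dots> = (\<Sum>B\<in>ksubsets {1..n + m} m. col_coeff n m f B * h B)"
    unfolding col_coeff_def sum_distrib_right by (intro sum.cong refl) auto
  finally show ?thesis .
qed

lemma col_coeff_relation:
  assumes T: "T \<in> tabs [n, m]" and b: "b \<in> colstab T"
  shows "col_coeff n m (\<lambda>S. delta T S - of_int (sign b) * delta (tab_act b T) S) B = 0"
proof -
  have "tab_act b T \<in> tabs [n, m]" "set (tab_act b T ! 1) = set (T ! 1)"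
    using tab_act_colstab_tabs[OF b T] set_tab_act_colstab[OF b] tabs2D(2)[OF T] by auto
  moreover have "of_int (sign b) * of_int (tab_sign (tab_act b T)) = (of_int (tab_sign T) :: complex)"
    using sign_colstab[OF b T] by (simp add: mult.assoc flip: of_int_mult)
  ultimately show ?thesis
    using T by (simp add: col_coeff_diff col_coeff_scale col_coeff_delta)
qed

definition Rel_gens :: "nat list \<Rightarrow> (nat list list \<Rightarrow> complex) set" where
  "Rel_gens cols = {(\<lambda>S. delta T S - of_int (sign b) * delta (tab_act b T) S) | T b.
                      T \<in> tabs cols \<and> b \<in> colstab T}"

lemma Rel_eq_cspan_Rel_gens: "Rel cols = cspan (Rel_gens cols)"
  by (simp add: Rel_def Rel_gens_def)

lemma Rel_gensE:
  assumes "a \<in> Rel_gens cols"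
  obtains T b where "T \<in> tabs cols" "b \<in> colstab T"
    "a = (\<lambda>S. delta T S - of_int (sign b) * delta (tab_act b T) S)"
  using assms unfolding Rel_gens_def by blast

lemma col_coeff_Rel:
  assumes "h \<in> Rel [n, m]"
  shows "col_coeff n m h B = 0"
proof -
  obtain F c where F: "finite F" "F \<subseteq> Rel_gens [n, m]" "h = (\<lambda>s. \<Sum>a\<in>F. c a * a s)"
    using assms unfolding Rel_eq_cspan_Rel_gens by (rule cspan_elim)
  have "col_coeff n m h B = (\<Sum>a\<in>F. c a * col_coeff n m a B)"
    unfolding F(3) by (simp add: col_coeff_sum col_coeff_scale)
  also have "\<dots> = 0"
  proof (rule sum.neutral, rule ballI)
    fix a assume "a \<in> F"
    then obtain T b where "T \<in> tabs [n, m]" "b \<in> colstab T"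
      "a = (\<lambda>S. delta T S - of_int (sign b) * delta (tab_act b T) S)"
      using F(2) by (blast elim: Rel_gensE)
    then show "c a * col_coeff n m a B = 0"
      by (simp add: col_coeff_relation)
  qed
  finally show ?thesis .
qed

lemma Rel_subset_Fsp: "Rel [n, m] \<subseteq> Fsp [n, m]"
proof
  fix h assume "h \<in> Rel [n, m]"
  then obtain F c where F: "F \<subseteq> Rel_gens [n, m]" "h = (\<lambda>s. \<Sum>a\<in>F. c a * a s)"
    unfolding Rel_eq_cspan_Rel_gens by (rule cspan_elim)
  have "a S = 0" if a: "a \<in> F" and S: "S \<notin> tabs [n, m]" for a S
  proof -
    obtain T b where "T \<in> tabs [n, m]" "b \<in> colstab T"
      "a = (\<lambda>S. delta T S - of_int (sign b) * delta (tab_act b T) S)"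
      using a F(1) by (blast elim: Rel_gensE)
    then show ?thesis
      using S tab_act_colstab_tabs by (auto simp: delta_def)
  qed
  then show "h \<in> Fsp [n, m]"
    unfolding Fsp_def F(2) by (auto intro!: sum.neutral)
qed

definition canon_tab :: "nat \<Rightarrow> nat \<Rightarrow> nat set \<Rightarrow> nat list list" where
  "canon_tab n m B = [sorted_list_of_set ({1..n + m} - B), sorted_list_of_set B]"

lemma
  assumes "B \<in> ksubsets {1..n + m} m"
  shows canon_tab_tabs: "canon_tab n m B \<in> tabs [n, m]"
    and set_canon_tab_col: "set (canon_tab n m B ! 1) = B"
proof -
  have B: "B \<subseteq> {1..n + m}" "card B = m" "finite B"
    using assms finite_subset by (auto simp: ksubsets_def)
  then show "set (canon_tab n m B ! 1) = B"
    by (simp add: canon_tab_def)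
  have "card ({1..n + m} - B) = n"
    using B by (simp add: card_Diff_subset)
  then show "canon_tab n m B \<in> tabs [n, m]"
    unfolding canon_tab_def by (intro tabs2I) (use B in auto)
qed

lemma exists_colstab_canon_tab:
  assumes T: "T \<in> tabs [n, m]"
  shows "\<exists>b\<in>colstab T. tab_act b T = canon_tab n m (set (T ! 1))"
proof -
  have "set (T ! 1) \<in> ksubsets {1..n + m} m"
    using tabs2D(10,11)[OF T] by (simp add: ksubsets_def)
  from canon_tab_tabs[OF this] set_canon_tab_col[OF this] show ?thesis
    by (intro exists_colstab_tab_act[OF T]) simp_all
qed

text \<open>The inverse of \<open>col_coeff\<close>: the vector \<open>\<Sum>\<^sub>B g B \<cdot> e\<^sub>B\<close>, written in canonical tableaux.\<close>

definition col_lift :: "nat \<Rightarrow> nat \<Rightarrow> (nat set \<Rightarrow> complex) \<Rightarrow> nat list list \<Rightarrow> complex" where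
  "col_lift n m g = (\<lambda>S. \<Sum>B\<in>ksubsets {1..n + m} m.
     (g B * of_int (tab_sign (canon_tab n m B))) * delta (canon_tab n m B) S)"

lemma col_lift_Fsp: "col_lift n m g \<in> Fsp [n, m]"
  unfolding Fsp_def col_lift_def using canon_tab_tabs by (auto simp: delta_def intro!: sum.neutral)

lemma col_coeff_col_lift:
  assumes "B \<in> ksubsets {1..n + m} m"
  shows "col_coeff n m (col_lift n m g) B = g B"
proof -
  have "col_coeff n m (col_lift n m g) B = (\<Sum>B'\<in>ksubsets {1..n + m} m.
      (g B' * of_int (tab_sign (canon_tab n m B'))) * col_coeff n m (delta (canon_tab n m B')) B)"
    unfolding col_lift_def by (simp add: col_coeff_sum col_coeff_scale)
  also have "\<dots> = (\<Sum>B'\<in>ksubsets {1..n + m} m. if B' = B then g B' else 0)"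
  proof (rule sum.cong[OF refl])
    fix B' assume B': "B' \<in> ksubsets {1..n + m} m"
    let ?s = "of_int (tab_sign (canon_tab n m B')) :: complex"
    have "col_coeff n m (delta (canon_tab n m B')) B = (if B' = B then ?s else 0)"
      using canon_tab_tabs[OF B'] set_canon_tab_col[OF B'] by (simp add: col_coeff_delta)
    moreover have "?s * ?s = 1"
      by (simp flip: of_int_mult)
    ultimately show "(g B' * ?s) * col_coeff n m (delta (canon_tab n m B')) B = (if B' = B then g B' else 0)"
      by (cases "B' = B") (simp_all add: mult.assoc)
  qed
  also have "\<dots> = g B"
    using assms by (simp add: finite_ksubsets)
  finally show ?thesis .
qed

lemma diff_col_lift_Rel:
  assumes f: "f \<in> Fsp [n, m]"
  shows "(\<lambda>S. f S - col_lift n m (col_coeff n m f) S) \<in> Rel [n, m]"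
proof -
  let ?R = "\<lambda>T. canon_tab n m (set (T ! 1))"
  have "\<exists>b\<in>colstab T. tab_act b T = ?R T" if "T \<in> tabs [n, m]" for T
    using exists_colstab_canon_tab[OF that] .
  then obtain b where b: "b T \<in> colstab T" "tab_act (b T) T = ?R T" if "T \<in> tabs [n, m]" for T
    by metis
  have sign_b: "of_int (sign (b T)) = (of_int (tab_sign T * tab_sign (?R T)) :: complex)"
    if "T \<in> tabs [n, m]" for T
    using sign_colstab[OF b(1)[OF that] that] b(2)[OF that] by simp
  define rel where "rel T S = delta T S - of_int (sign (b T)) * delta (tab_act (b T) T) S" for T S
  have "(\<lambda>S. \<Sum>T\<in>tabs [n, m]. f T * rel T S) \<in> Rel [n, m]"
    unfolding Rel_eq_cspan_Rel_gens
  proof (intro cspan_sum[OF finite_tabs] cspan_scale cspan_base)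
    show "rel T \<in> Rel_gens [n, m]" if "T \<in> tabs [n, m]" for T
      unfolding Rel_gens_def rel_def using that b(1) by blast
  qed
  moreover have "f S - col_lift n m (col_coeff n m f) S = (\<Sum>T\<in>tabs [n, m]. f T * rel T S)" for S
  proof -
    have "col_lift n m (col_coeff n m f) S = (\<Sum>B\<in>ksubsets {1..n + m} m.
        col_coeff n m f B * (of_int (tab_sign (canon_tab n m B)) * delta (canon_tab n m B) S))"
      by (simp add: col_lift_def mult.assoc)
    also have "\<dots>
        = (\<Sum>T\<in>tabs [n, m]. f T * of_int (tab_sign T) * (of_int (tab_sign (?R T)) * delta (?R T) S))"
      by (rule sum_tabs_group_col[symmetric])
    also have "\<dots> = (\<Sum>T\<in>tabs [n, m]. f T * (of_int (sign (b T)) * delta (tab_act (b T) T) S))"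
      by (rule sum.cong) (simp_all add: sign_b b(2) mult.assoc)
    finally show ?thesis
      by (subst Fsp_eq_sum_delta[OF f]) (simp add: rel_def algebra_simps sum_subtractf)
  qed
  ultimately show ?thesis
    by simp
qed

lemma Rel_iff_col_coeff_eq_0:
  assumes "f \<in> Fsp [n, m]"
  shows "f \<in> Rel [n, m] \<longleftrightarrow> (\<forall>B. col_coeff n m f B = 0)"
proof
  assume "\<forall>B. col_coeff n m f B = 0"
  then have "col_lift n m (col_coeff n m f) = (\<lambda>_. 0)"
    by (simp add: col_lift_def)
  then show "f \<in> Rel [n, m]"
    using diff_col_lift_Rel[OF assms] by simp
qed (simp add: col_coeff_Rel)

section \<open>The map \<open>eta\<close> in coordinates\<close>

lemma tab_act_transpose:
  assumes T: "T \<in> tabs [n, m]" and x: "x \<in> set (T ! 0)" and y: "y \<in> set (T ! 1)"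
  shows "tab_act (transpose x y) T \<in> tabs [n, m]"
    and "tab_sign (tab_act (transpose x y) T) = - tab_sign T"
    and "set (tab_act (transpose x y) T ! 1) = insert x (set (T ! 1) - {y})"
proof -
  have xy: "x \<noteq> y" "x \<notin> set (T ! 1)"
    using tabs2D(7)[OF T] x y by auto
  have "transpose x y permutes {1..n + m}"
    using tabs2D(8)[OF T] x y by (intro permutes_swap_id) auto
  then show "tab_act (transpose x y) T \<in> tabs [n, m]"
    and "tab_sign (tab_act (transpose x y) T) = - tab_sign T"
    using tab_act_tabs2[OF _ T] tab_sign_tab_act2[OF _ T] xy(1)
    by (simp_all add: sign_swap_id)
  show "set (tab_act (transpose x y) T ! 1) = insert x (set (T ! 1) - {y})"
    using set_tab_act_nth[OF T, of 1] xy y by (auto simp: transpose_def image_iff)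
qed

lemma card_insert_eq:
  assumes "finite X" "C \<subseteq> X" "B' \<subseteq> X" "card B' = card C + 1"
  shows "card {x \<in> X - C. insert x C = B'} = (if C \<subseteq> B' then 1 else 0)"
proof (cases "C \<subseteq> B'")
  case True
  have "card (B' - C) = 1"
    using assms True by (simp add: card_Diff_subset rev_finite_subset)
  then obtain z where z: "B' - C = {z}"
    by (meson card_1_singletonE)
  then have "{x \<in> X - C. insert x C = B'} = {z}"
    using True assms(3) by auto
  then show ?thesis using True by simp
next
  case False
  then have "{x \<in> X - C. insert x C = B'} = {}"
    by auto
  then show ?thesis
    using False by (metis card.empty)
qed

text \<open>The left-hand side counts the ways of turning \<open>B\<close> into \<open>B'\<close> by exchanging \<open>y\<close> for some
  \<open>x \<notin> B - {y}\<close>, the case \<open>x = y\<close> being the first summand.\<close>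

lemma card_exchange_eq:
  assumes X: "finite X" and B: "B \<subseteq> X" "B' \<subseteq> X" "card B' = card B" and y: "y \<in> B"
  shows "(if B = B' then 1 else 0) + card {x \<in> X - B. insert x (B - {y}) = B'}
       = (if B - {y} \<subseteq> B' then 1 else 0)"
proof -
  let ?P = "\<lambda>x. insert x (B - {y}) = B'"
  have "{x \<in> X - (B - {y}). ?P x} = (if B = B' then insert y {x \<in> X - B. ?P x} else {x \<in> X - B. ?P x})"
    using y B by (auto simp: insert_absorb)
  then have split: "card {x \<in> X - (B - {y}). ?P x} = (if B = B' then 1 else 0) + card {x \<in> X - B. ?P x}"
    using y X by (simp add: card_insert_if) blast
  have "finite B"
    using B(1) X rev_finite_subset by blast
  then have "card B > 0"
    using y card_gt_0_iff by blast
  then have "card B' = card (B - {y}) + 1"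
    using B(3) y by (simp add: card_Diff_singleton)
  then have "card {x \<in> X - (B - {y}). ?P x} = (if B - {y} \<subseteq> B' then 1 else 0)"
    using X B by (intro card_insert_eq) auto
  then show ?thesis
    using split by simp
qed

lemma col_coeff_piop:
  assumes T: "T \<in> tabs [n, m]" and j: "j \<in> {1..m}"
  shows "col_coeff n m (piop 1 j T) B' = - of_int (tab_sign T)
    * of_nat (card {x \<in> {1..n + m} - set (T ! 1). insert x (set (T ! 1) - {T ! 1 ! (j - 1)}) = B'})"
proof -
  let ?B = "set (T ! 1)" and ?y = "T ! 1 ! (j - 1)" and ?s = "of_int (tab_sign T) :: complex"
  have y: "?y \<in> ?B"
    using j tabs2D(4)[OF T] by auto
  have "col_coeff n m (piop 1 j T) B'
      = (\<Sum>x\<in>set (T ! 0). col_coeff n m (delta (tab_act (transpose x ?y) T)) B')"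
    by (simp add: piop_def col_coeff_sum)
  also have "\<dots> = (\<Sum>x\<in>set (T ! 0). if insert x (?B - {?y}) = B' then - ?s else 0)"
  proof (rule sum.cong[OF refl])
    fix x assume x: "x \<in> set (T ! 0)"
    show "col_coeff n m (delta (tab_act (transpose x ?y) T)) B'
        = (if insert x (?B - {?y}) = B' then - ?s else 0)"
      unfolding col_coeff_delta using tab_act_transpose[OF T x y] by simp
  qed
  also have "\<dots> = - ?s * of_nat (card {x \<in> {1..n + m} - ?B. insert x (?B - {?y}) = B'})"
    using tabs2D(9)[OF T] by (simp add: sum.If_cases Int_def)
  finally show ?thesis .
qed

lemma sum_upto_nth:
  assumes "distinct xs" "length xs = m"
  shows "(\<Sum>j\<in>{1..m}. g (xs ! (j - 1))) = (\<Sum>y\<in>set xs. g y)"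
proof -
  have "(\<Sum>j\<in>{1..m}. g (xs ! (j - 1))) = (\<Sum>i<m. g (xs ! i))"
    by (rule sum.reindex_bij_witness[of _ Suc "\<lambda>j. j - 1"]) auto
  also have "\<dots> = (\<Sum>y\<in>set xs. g y)"
    using assms by (simp add: sum_list_sum_nth atLeast0LessThan sum.distinct_set_conv_list)
  finally show ?thesis .
qed

lemma col_coeff_eta_delta:
  assumes T: "T \<in> tabs [n, m]" and B': "B' \<in> ksubsets {1..n + m} m"
  shows "col_coeff n m (\<lambda>S. of_nat m * delta T S - (\<Sum>j\<in>{1..m}. piop 1 j T S)) B'
       = of_int (tab_sign T) * of_nat (card {y \<in> set (T ! 1). set (T ! 1) - {y} \<subseteq> B'})"
proof -
  let ?X = "{1..n + m}" and ?B = "set (T ! 1)" and ?s = "of_int (tab_sign T) :: complex"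
  let ?c = "\<lambda>y. card {x \<in> ?X - ?B. insert x (?B - {y}) = B'}"
  have "B' \<subseteq> ?X" "card B' = card ?B"
    using B' tabs2D(11)[OF T] by (simp_all add: ksubsets_def)
  then have count: "(if ?B = B' then 1 else 0) + ?c y = (if ?B - {y} \<subseteq> B' then 1 else 0)"
    if "y \<in> ?B" for y
    using card_exchange_eq[OF finite_atLeastAtMost tabs2D(10)[OF T] _ _ that] by blast
  have piop: "(\<Sum>j\<in>{1..m}. col_coeff n m (piop 1 j T) B')
      = (\<Sum>j\<in>{1..m}. - ?s * of_nat (?c (T ! 1 ! (j - 1))))"
    by (intro sum.cong refl col_coeff_piop[OF T])
  have "col_coeff n m (\<lambda>S. of_nat m * delta T S - (\<Sum>j\<in>{1..m}. piop 1 j T S)) B'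
      = of_nat m * col_coeff n m (delta T) B' - (\<Sum>j\<in>{1..m}. col_coeff n m (piop 1 j T) B')"
    by (simp add: col_coeff_diff col_coeff_scale col_coeff_sum)
  also have "\<dots> = ?s * (of_nat m * (if ?B = B' then 1 else 0) + (\<Sum>j\<in>{1..m}. of_nat (?c (T ! 1 ! (j - 1)))))"
    unfolding piop using T by (simp add: col_coeff_delta sum_distrib_left sum_negf algebra_simps)
  also have "(\<Sum>j\<in>{1..m}. of_nat (?c (T ! 1 ! (j - 1)))) = (\<Sum>y\<in>?B. of_nat (?c y) :: complex)"
    using sum_upto_nth tabs2D(4,6)[OF T] by simp
  also have "of_nat m * (if ?B = B' then 1 else 0) = (\<Sum>y\<in>?B. if ?B = B' then 1 else 0 :: complex)"
    using tabs2D(11)[OF T] by simp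
  also have "(\<Sum>y\<in>?B. if ?B = B' then 1 else 0 :: complex) + (\<Sum>y\<in>?B. of_nat (?c y))
      = (\<Sum>y\<in>?B. of_nat ((if ?B = B' then 1 else 0) + ?c y))"
    by (simp add: sum.distrib)
  also have "\<dots> = (\<Sum>y\<in>?B. of_nat (if ?B - {y} \<subseteq> B' then 1 else 0))"
    using count by (intro sum.cong) simp_all
  also have "\<dots> = of_nat (card {y \<in> ?B. ?B - {y} \<subseteq> B'})"
    by (simp add: sum.inter_filter[symmetric] of_nat_sum[symmetric])
  finally show ?thesis .
qed

lemma col_coeff_eta:
  "col_coeff n m (eta n m f) B' = gram {1..n + m} m (col_coeff n m f) B'"
proof (cases "B' \<in> ksubsets {1..n + m} m")
  case True
  have "col_coeff n m (eta n m f) B'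
      = (\<Sum>T\<in>tabs [n, m]. f T * col_coeff n m (\<lambda>S. of_nat m * delta T S - (\<Sum>j\<in>{1..m}. piop 1 j T S)) B')"
    by (simp add: eta_def col_coeff_sum col_coeff_scale)
  also have "\<dots> = (\<Sum>T\<in>tabs [n, m].
      f T * of_int (tab_sign T) * of_nat (card {y \<in> set (T ! 1). set (T ! 1) - {y} \<subseteq> B'}))"
  proof (rule sum.cong[OF refl])
    fix T assume "T \<in> tabs [n, m]"
    from col_coeff_eta_delta[OF this True] show "f T * col_coeff n m (\<lambda>S. of_nat m * delta T S
        - (\<Sum>j\<in>{1..m}. piop 1 j T S)) B'
      = f T * of_int (tab_sign T) * of_nat (card {y \<in> set (T ! 1). set (T ! 1) - {y} \<subseteq> B'})"
      by (simp only: mult.assoc)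
  qed
  also have "\<dots> = (\<Sum>B\<in>ksubsets {1..n + m} m. col_coeff n m f B * of_nat (card {y \<in> B. B - {y} \<subseteq> B'}))"
    by (rule sum_tabs_group_col)
  also have "\<dots> = gram {1..n + m} m (col_coeff n m f) B'"
    using gram_eq_sum_card[OF _ True] by simp
  finally show ?thesis .
qed (simp add: col_coeff_outside gram_outside)

lemma eta_Fsp: "eta n m g \<in> Fsp [n, m]"
  unfolding Fsp_def
proof (intro CollectI allI impI)
  fix S assume S: "S \<notin> tabs [n, m]"
  have "piop 1 j T S = 0" if T: "T \<in> tabs [n, m]" and j: "j \<in> {1..m}" for T j
  proof -
    have y: "T ! 1 ! (j - 1) \<in> set (T ! 1)"
      using j tabs2D(4)[OF T] by auto
    have "delta (tab_act (transpose x (T ! 1 ! (j - 1))) T) S = 0" if x: "x \<in> set (T ! 0)" for x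
      using tab_act_transpose(1)[OF T x y] S by (auto simp: delta_def)
    then show ?thesis
      by (simp add: piop_def)
  qed
  moreover have "delta T S = 0" if "T \<in> tabs [n, m]" for T
    using that S by (auto simp: delta_def)
  ultimately show "eta n m g S = 0"
    by (simp add: eta_def)
qed

lemma exists_eta_Rel_diff_eta:
  assumes f: "f \<in> Fsp [n, m]"
  shows "\<exists>g\<in>Fsp [n, m]. eta n m (\<lambda>S. f S - eta n m g S) \<in> Rel [n, m]"
proof -
  let ?X = "{1..n + m}" and ?c = "col_coeff n m"
  obtain w where w: "gram ?X m (?c f) = gram ?X m (gram ?X m w)"
    using gram_eq_gram_gram by blast
  define g where "g = col_lift n m w"
  have "gram ?X m (?c g) = gram ?X m w"
    unfolding g_def by (rule gram_cong) (simp add: col_coeff_col_lift)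
  moreover have "?c (\<lambda>S. f S - eta n m g S) = (\<lambda>B. ?c f B - gram ?X m (?c g) B)"
    by (simp add: fun_eq_iff col_coeff_diff col_coeff_eta)
  ultimately have "?c (eta n m (\<lambda>S. f S - eta n m g S)) B = 0" for B
    using w by (simp add: col_coeff_eta gram_diff)
  moreover have "eta n m (\<lambda>S. f S - eta n m g S) \<in> Fsp [n, m]"
    by (rule eta_Fsp)
  ultimately show ?thesis
    using Rel_iff_col_coeff_eq_0 col_lift_Fsp g_def by blast
qed

section \<open>The map \<open>alpha\<close> in coordinates\<close>

lemma alpha_add: "alpha cols (\<lambda>S. f S + g S) = (\<lambda>r. alpha cols f r + alpha cols g r)"
  unfolding alpha_def by (simp add: distrib_right sum.distrib)

lemma alpha_scale: "alpha cols (\<lambda>S. c * f S) = (\<lambda>r. c * alpha cols f r)"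
  unfolding alpha_def by (simp add: sum_distrib_left mult.assoc)

lemma alpha_diff: "alpha cols (\<lambda>S. f S - g S) = (\<lambda>r. alpha cols f r - alpha cols g r)"
  unfolding alpha_def by (simp add: left_diff_distrib sum_subtractf)

lemma alpha_sum: "alpha cols (\<lambda>S. \<Sum>i\<in>I. g i S) r = (\<Sum>i\<in>I. alpha cols (g i) r)"
  unfolding alpha_def sum_distrib_right by (rule sum.swap)

lemma alpha_delta:
  assumes "T \<in> tabs cols"
  shows "alpha cols (delta T) = polytab T"
proof
  fix r
  have "alpha cols (delta T) r = (\<Sum>T'\<in>tabs cols. if T' = T then polytab T' r else 0)"
    unfolding alpha_def delta_def by (rule sum.cong) auto
  then show "alpha cols (delta T) r = polytab T r"
    using assms by (simp add: finite_tabs)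
qed

text \<open>The image under \<open>alpha\<close> of the basis vector \<open>e\<^sub>B\<close>, evaluated at the row tabloid \<open>r\<close>.\<close>

definition basis_polytab :: "nat \<Rightarrow> nat \<Rightarrow> nat set \<Rightarrow> (nat \<Rightarrow> nat) \<Rightarrow> complex" where
  "basis_polytab n m B r = (\<Sum>T\<in>{T \<in> tabs [n, m]. rowof T = r \<and> set (T ! 1) = B}. of_int (tab_sign T))"

lemma colstab_bij_betw:
  assumes T: "T \<in> tabs [n, m]"
  shows "bij_betw (\<lambda>b. tab_act b T) (colstab T) {T' \<in> tabs [n, m]. set (T' ! 1) = set (T ! 1)}"
proof (rule bij_betwI')
  show "(tab_act b T = tab_act b' T) = (b = b')" if "b \<in> colstab T" "b' \<in> colstab T" for b b'
    using tab_act_inj_on_permutes[OF T colstab_permutes[OF that(1) T] colstab_permutes[OF that(2) T]]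
    by auto
  show "tab_act b T \<in> {T' \<in> tabs [n, m]. set (T' ! 1) = set (T ! 1)}" if "b \<in> colstab T" for b
    using tab_act_colstab_tabs[OF that T] set_tab_act_colstab[OF that] tabs2D(2)[OF T] by simp
  show "\<exists>b\<in>colstab T. T' = tab_act b T" if "T' \<in> {T' \<in> tabs [n, m]. set (T' ! 1) = set (T ! 1)}" for T'
    using exists_colstab_tab_act[OF T, of T'] that by auto
qed

lemma polytab_eq_basis_polytab:
  assumes T: "T \<in> tabs [n, m]"
  shows "polytab T r = of_int (tab_sign T) * basis_polytab n m (set (T ! 1)) r"
proof -
  let ?A = "{T' \<in> tabs [n, m]. set (T' ! 1) = set (T ! 1)}"
  have sign: "of_int (sign b) = (of_int (tab_sign T) * of_int (tab_sign (tab_act b T)) :: complex)"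
    if "b \<in> colstab T" for b
    using sign_colstab[OF that T] by simp
  have "polytab T r = of_int (tab_sign T)
      * (\<Sum>b\<in>colstab T. of_int (tab_sign (tab_act b T)) * (if r = rowof (tab_act b T) then 1 else 0))"
    unfolding polytab_def sum_distrib_left by (intro sum.cong refl) (simp add: sign mult.assoc)
  also have "(\<Sum>b\<in>colstab T. of_int (tab_sign (tab_act b T)) * (if r = rowof (tab_act b T) then 1 else 0))
      = (\<Sum>T'\<in>?A. of_int (tab_sign T') * (if r = rowof T' then 1 else 0))"
    by (rule sum.reindex_bij_betw[OF colstab_bij_betw[OF T]])
  also have "\<dots> = basis_polytab n m (set (T ! 1)) r"
    unfolding basis_polytab_def by (rule sum.mono_neutral_cong_right) (auto simp: finite_tabs)
  finally show ?thesis .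
qed

lemma alpha_eq_sum_basis_polytab:
  "alpha [n, m] f r = (\<Sum>B\<in>ksubsets {1..n + m} m. col_coeff n m f B * basis_polytab n m B r)"
proof -
  have "alpha [n, m] f r
      = (\<Sum>T\<in>tabs [n, m]. f T * of_int (tab_sign T) * basis_polytab n m (set (T ! 1)) r)"
    unfolding alpha_def by (intro sum.cong refl) (simp add: polytab_eq_basis_polytab mult.assoc)
  also have "\<dots> = (\<Sum>B\<in>ksubsets {1..n + m} m. col_coeff n m f B * basis_polytab n m B r)"
    by (rule sum_tabs_group_col)
  finally show ?thesis .
qed

lemma alpha_eq_sum_rowof:
  "alpha [n, m] f r = (\<Sum>T\<in>{T \<in> tabs [n, m]. rowof T = r}. of_int (tab_sign T) * col_coeff n m f (set (T ! 1)))"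
proof -
  have "alpha [n, m] f r = (\<Sum>B\<in>ksubsets {1..n + m} m.
      \<Sum>T\<in>{T \<in> {T \<in> tabs [n, m]. rowof T = r}. set (T ! 1) = B}. of_int (tab_sign T) * col_coeff n m f (set (T ! 1)))"
    unfolding alpha_eq_sum_basis_polytab basis_polytab_def sum_distrib_left
    by (intro sum.cong refl) (auto simp: mult.commute)
  also have "\<dots> = (\<Sum>T\<in>{T \<in> tabs [n, m]. rowof T = r}. of_int (tab_sign T) * col_coeff n m f (set (T ! 1)))"
    by (rule sum.group) (use tabs2D(10,11) in \<open>auto simp: finite_ksubsets finite_tabs ksubsets_def\<close>)
  finally show ?thesis .
qed

lemma alpha_Rel: "h \<in> Rel [n, m] \<Longrightarrow> alpha [n, m] h = (\<lambda>r. 0)"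
  by (simp add: fun_eq_iff alpha_eq_sum_basis_polytab col_coeff_Rel)

lemma sum_tab_sign_eq_0_if_same_row:
  assumes ab: "a \<in> {1..n + m} - C" "b \<in> {1..n + m} - C" "a \<noteq> b" "r a = r b"
  shows "(\<Sum>T\<in>{T \<in> tabs [n, m]. rowof T = r \<and> C \<subseteq> set (T ! 1)}. of_int (tab_sign T)) = (0 :: complex)"
proof (rule sum_involution_eq_0[where h="tab_act (transpose a b)"])
  let ?g = "transpose a b"
  have g: "?g permutes {1..n + m}"
    using ab by (intro permutes_swap_id) auto
  fix T assume T: "T \<in> {T \<in> tabs [n, m]. rowof T = r \<and> C \<subseteq> set (T ! 1)}"
  then have T1: "T \<in> tabs [n, m]" by simp
  have sign: "tab_sign (tab_act ?g T) = - tab_sign T"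
    using tab_sign_tab_act2[OF g T1] ab(3) by (simp add: sign_swap_id)
  then show "of_int (tab_sign (tab_act ?g T)) + of_int (tab_sign T) = (0 :: complex)"
    by simp
  show "tab_act ?g (tab_act ?g T) = T"
    by (simp add: tab_act_comp)
  show "tab_act ?g T \<noteq> T"
  proof
    assume "tab_act ?g T = T"
    then show False
      using sign tab_sign_neq_0[of T] by simp
  qed
  have "rowof (tab_act ?g T) = r"
    using rowof_tab_act_eq_comp[OF T1 g] T ab(4) by (auto simp: fun_eq_iff transpose_def)
  moreover have "C \<subseteq> ?g ` set (T ! 1)"
  proof
    fix z assume z: "z \<in> C"
    then have "?g z = z" "z \<in> set (T ! 1)"
      using ab(1,2) T by (auto simp: transpose_def)
    then show "z \<in> ?g ` set (T ! 1)"
      by (metis image_eqI)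
  qed
  then have "C \<subseteq> set (tab_act ?g T ! 1)"
    using set_tab_act_nth[OF T1, of 1 ?g] by simp
  ultimately show "tab_act ?g T \<in> {T \<in> tabs [n, m]. rowof T = r \<and> C \<subseteq> set (T ! 1)}"
    using tab_act_tabs2[OF g T1] by simp
qed

lemma sup_sum_basis_polytab_eq_0:
  assumes mn: "m \<le> n" and C: "C \<subseteq> {1..n + m}" "card C + 1 = m"
  shows "sup_sum {1..n + m} m (\<lambda>B. basis_polytab n m B r) C = 0"
proof -
  let ?S = "{T \<in> tabs [n, m]. rowof T = r \<and> C \<subseteq> set (T ! 1)}"
  have "sup_sum {1..n + m} m (\<lambda>B. basis_polytab n m B r) C
      = (\<Sum>B\<in>{B \<in> ksubsets {1..n + m} m. C \<subseteq> B}. \<Sum>T\<in>{T \<in> ?S. set (T ! 1) = B}. of_int (tab_sign T))"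
    unfolding sup_sum_def basis_polytab_def by (intro sum.cong refl) auto
  also have "\<dots> = (\<Sum>T\<in>?S. of_int (tab_sign T))"
    by (rule sum.group) (use tabs2D(10,11) in \<open>auto simp: finite_ksubsets finite_tabs ksubsets_def\<close>)
  also have "\<dots> = 0"
  proof (cases "?S = {}")
    case False
    then obtain T0 where T0: "T0 \<in> tabs [n, m]" "rowof T0 = r"
      by blast
    let ?X = "{1..n + m} - C"
    have "card ?X = n + 1"
      using C by (simp add: card_Diff_subset finite_subset)
    moreover have "rowof T0 ` ?X \<subseteq> {..<n}"
      using rowof_less[OF T0(1) mn] by auto
    ultimately have "\<not> inj_on (rowof T0) ?X"
      using card_inj_on_le[of "rowof T0" ?X "{..<n}"] by auto
    then obtain a b where "a \<in> ?X" "b \<in> ?X" "a \<noteq> b" "r a = r b"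
      unfolding inj_on_def T0(2) by blast
    then show ?thesis
      by (rule sum_tab_sign_eq_0_if_same_row)
  qed (simp only: sum.empty)
  finally show ?thesis .
qed

lemma alpha_eta:
  assumes "m \<le> n"
  shows "alpha [n, m] (eta n m f) r = 0"
proof -
  let ?X = "{1..n + m}" and ?v = "col_coeff n m f"
  let ?Cs = "{C. C \<subseteq> ?X \<and> card C + 1 = m}"
  have "alpha [n, m] (eta n m f) r
      = (\<Sum>B\<in>ksubsets ?X m. \<Sum>C\<in>{C \<in> ?Cs. C \<subseteq> B}. sup_sum ?X m ?v C * basis_polytab n m B r)"
    unfolding alpha_eq_sum_basis_polytab col_coeff_eta
    by (intro sum.cong refl) (auto simp: gram_def sub_sum_def ksubsets_def sum_distrib_right intro!: sum.cong)
  also have "\<dots> = (\<Sum>C\<in>?Cs. sup_sum ?X m ?v C * sup_sum ?X m (\<lambda>B. basis_polytab n m B r) C)"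
    by (subst sum.swap_restrict) (auto simp: finite_ksubsets sup_sum_def sum_distrib_left)
  also have "\<dots> = 0"
    using sup_sum_basis_polytab_eq_0[OF assms] by simp
  finally show ?thesis .
qed

section \<open>Injectivity of \<open>alpha\<close> on the kernel of \<open>eta\<close>\<close>

definition pair_rest :: "nat \<Rightarrow> nat \<Rightarrow> (nat \<times> nat) list \<Rightarrow> nat list" where
  "pair_rest n m ps = sorted_list_of_set ({1..n + m} - set (flat_pairs ps))"

text \<open>Row \<open>i < length ps\<close> of \<open>pair_tab n m ps S\<close> holds the \<open>i\<close>-th pair, swapped iff \<open>i \<notin> S\<close>, and the
  remaining entries fill the rest of the first column. For distinct pairs these are exactly the
  tableaux with the row tabloid of \<open>pair_tab n m ps {}\<close>.\<close>

definition pair_tab :: "nat \<Rightarrow> nat \<Rightarrow> (nat \<times> nat) list \<Rightarrow> nat set \<Rightarrow> nat list list" where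
  "pair_tab n m ps S = [map (pair_entry ps (- S)) [0..<length ps] @ pair_rest n m ps,
     map (pair_entry ps S) [0..<length ps]]"

context
  fixes n m :: nat and ps :: "(nat \<times> nat) list"
  assumes lp: "length ps = m" and dp: "distinct (flat_pairs ps)"
    and sp: "set (flat_pairs ps) \<subseteq> {1..n + m}" and mn: "m \<le> n"
begin

lemma pair_mem: "i < m \<Longrightarrow> fst (ps ! i) \<in> set (flat_pairs ps)" "i < m \<Longrightarrow> snd (ps ! i) \<in> set (flat_pairs ps)"
  using lp by (auto simp: set_flat_pairs)

lemma pair_entry_mem: "i < m \<Longrightarrow> pair_entry ps (- S) i \<in> set (flat_pairs ps)" "i < m \<Longrightarrow> pair_entry ps S i \<in> set (flat_pairs ps)"
  using pair_mem by (auto simp: pair_entry_def)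

lemma pair_entry_distinct:
  assumes "i < m" "j < m"
  shows "pair_entry ps (- S) i \<noteq> pair_entry ps S j"
    and "pair_entry ps (- S) i = pair_entry ps (- S) j \<Longrightarrow> i = j"
    and "pair_entry ps S i = pair_entry ps S j \<Longrightarrow> i = j"
proof -
  note pd = distinct_flat_pairsD[OF dp, unfolded lp, OF assms]
    distinct_flat_pairsD[OF dp, unfolded lp, OF assms(2,1)]
  show "pair_entry ps (- S) i \<noteq> pair_entry ps S j"
    using pd by (auto simp: pair_entry_def)
  show "pair_entry ps (- S) i = pair_entry ps (- S) j \<Longrightarrow> i = j"
    using pd by (auto simp: pair_entry_def split: if_splits)
  show "pair_entry ps S i = pair_entry ps S j \<Longrightarrow> i = j"
    using pd by (auto simp: pair_entry_def split: if_splits)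
qed

lemma pair_fst_ne_snd: "i < m \<Longrightarrow> fst (ps ! i) \<noteq> snd (ps ! i)"
  using distinct_flat_pairsD(1)[OF dp] lp by auto

lemma set_pair_rest: "set (pair_rest n m ps) = {1..n + m} - set (flat_pairs ps)"
  and distinct_pair_rest: "distinct (pair_rest n m ps)"
  and length_pair_rest: "length (pair_rest n m ps) = n - m"
proof -
  show "set (pair_rest n m ps) = {1..n + m} - set (flat_pairs ps)" "distinct (pair_rest n m ps)"
    by (auto simp: pair_rest_def)
  have "card (set (flat_pairs ps)) = 2 * m"
    using dp lp by (simp add: distinct_card length_flat_pairs)
  then have "card ({1..n + m} - set (flat_pairs ps)) = n - m"
    using sp by (simp add: card_Diff_subset rev_finite_subset)
  then show "length (pair_rest n m ps) = n - m"
    by (simp add: pair_rest_def)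
qed

lemma pair_entry_Un: "pair_entry ps (- S) ` {..<m} \<union> pair_entry ps S ` {..<m} = set (flat_pairs ps)"
proof (intro equalityI subsetI)
  fix x assume "x \<in> pair_entry ps (- S) ` {..<m} \<union> pair_entry ps S ` {..<m}"
  then show "x \<in> set (flat_pairs ps)" using pair_entry_mem by auto
next
  fix x assume "x \<in> set (flat_pairs ps)"
  then obtain i where i: "i < m" "x = fst (ps ! i) \<or> x = snd (ps ! i)"
    using lp unfolding set_flat_pairs by (auto simp: in_set_conv_nth)
  then have "x = pair_entry ps (- S) i \<or> x = pair_entry ps S i" by (auto simp: pair_entry_def)
  then show "x \<in> pair_entry ps (- S) ` {..<m} \<union> pair_entry ps S ` {..<m}" using i by auto
qed

lemma pair_tab_tabs: "pair_tab n m ps S \<in> tabs [n, m]"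
proof -
  let ?A = "map (pair_entry ps (- S)) [0..<m]" and ?W = "map (pair_entry ps S) [0..<m]" and ?R = "pair_rest n m ps"
  have d1: "distinct ?A"
    unfolding distinct_map by (auto simp: inj_on_def intro: pair_entry_distinct(2))
  have d2: "distinct ?W"
    unfolding distinct_map by (auto simp: inj_on_def intro: pair_entry_distinct(3))
  have sA: "set ?A \<subseteq> set (flat_pairs ps)" "set ?W \<subseteq> set (flat_pairs ps)" using pair_entry_mem by auto
  have disj1: "set ?A \<inter> set ?R = {}" using sA(1) set_pair_rest by blast
  have disjAW: "set ?A \<inter> set ?W = {}"
  proof -
    have "x \<notin> set ?W" if x: "x \<in> set ?A" for x
    proof
      assume "x \<in> set ?W"
      then obtain i j where "i < m" "j < m" "x = pair_entry ps (- S) i" "x = pair_entry ps S j" using x by auto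
      then show False using pair_entry_distinct(1) by metis
    qed
    then show ?thesis by blast
  qed
  have disjRW: "set ?R \<inter> set ?W = {}" using sA(2) set_pair_rest by blast
  have dist: "distinct ((?A @ ?R) @ ?W)"
  proof -
    have "set ?A \<inter> (set ?R \<union> set ?W) = {}" using disj1 disjAW by blast
    then show ?thesis using d1 d2 disjRW distinct_pair_rest by simp
  qed
  have "set ?A \<union> set ?W = set (flat_pairs ps)"
    using pair_entry_Un[of S] by (simp add: atLeast0LessThan)
  then have un: "set (?A @ ?R) \<union> set ?W = {1..n + m}"
    using set_pair_rest sp by auto
  have l1: "length (?A @ ?R) = n" using length_pair_rest mn by simp
  have l2: "length ?W = m" by simp
  show ?thesis unfolding pair_tab_def lp by (rule tabs2I[OF l1 l2 dist un])
qed

lemma pair_tab_nth: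
  "i < m \<Longrightarrow> pair_tab n m ps S ! 0 ! i = pair_entry ps (- S) i"
  "i < m \<Longrightarrow> pair_tab n m ps S ! 1 ! i = pair_entry ps S i"
  "m \<le> i \<Longrightarrow> i < n \<Longrightarrow> pair_tab n m ps S ! 0 ! i = pair_rest n m ps ! (i - m)"
  using lp by (auto simp: pair_tab_def nth_append)

lemma pair_tab_len: "length (pair_tab n m ps S ! 0) = n" "length (pair_tab n m ps S ! 1) = m"
  using tabs2D(3,4)[OF pair_tab_tabs] by auto

lemma rowof_pair_tab_fst: "i < m \<Longrightarrow> rowof (pair_tab n m ps S) (fst (ps ! i)) = i"
  and rowof_pair_tab_snd: "i < m \<Longrightarrow> rowof (pair_tab n m ps S) (snd (ps ! i)) = i"
proof -
  assume i: "i < m"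
  have r0: "rowof (pair_tab n m ps S) (pair_entry ps (- S) i) = i"
    using rowof_nth[OF pair_tab_tabs, of 0 i] pair_tab_nth(1)[OF i] pair_tab_len mn i by simp
  have r1: "rowof (pair_tab n m ps S) (pair_entry ps S i) = i"
    using rowof_nth[OF pair_tab_tabs, of 1 i] pair_tab_nth(2)[OF i] pair_tab_len i by simp
  show "rowof (pair_tab n m ps S) (fst (ps ! i)) = i" "rowof (pair_tab n m ps S) (snd (ps ! i)) = i"
    using r0 r1 by (auto simp: pair_entry_def split: if_splits)
qed

lemma rowof_pair_tab_rest: "j < n - m \<Longrightarrow> rowof (pair_tab n m ps S) (pair_rest n m ps ! j) = m + j"
proof -
  assume j: "j < n - m"
  have mj: "m + j < n" using j by simp
  have "pair_tab n m ps S ! 0 ! (m + j) = pair_rest n m ps ! j" using pair_tab_nth(3)[of "m+j"] mj by simp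
  moreover have "rowof (pair_tab n m ps S) (pair_tab n m ps S ! 0 ! (m + j)) = m + j"
    using rowof_nth[OF pair_tab_tabs, of 0 "m+j"] pair_tab_len mj by simp
  ultimately show ?thesis by simp
qed

lemma rowof_pair_tab: "rowof (pair_tab n m ps S) = rowof (pair_tab n m ps {})"
proof
  fix x
  show "rowof (pair_tab n m ps S) x = rowof (pair_tab n m ps {}) x"
  proof (cases "x \<in> set (flat_pairs ps)")
    case True
    then obtain i where i: "i < m" "x = fst (ps ! i) \<or> x = snd (ps ! i)"
      using lp unfolding set_flat_pairs by (auto simp: in_set_conv_nth)
    then show ?thesis using rowof_pair_tab_fst rowof_pair_tab_snd by auto
  next
    case False
    show ?thesis
    proof (cases "x \<in> {1..n + m}")
      case True
      then have "x \<in> set (pair_rest n m ps)" using False set_pair_rest by auto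
      then obtain j where "j < n - m" "x = pair_rest n m ps ! j" using length_pair_rest by (auto simp: in_set_conv_nth)
      then show ?thesis using rowof_pair_tab_rest by simp
    next
      case nx: False
      have "x \<notin> set (concat (pair_tab n m ps S))" "x \<notin> set (concat (pair_tab n m ps {}))"
        using tabsD(3)[OF pair_tab_tabs] nx by auto
      then show ?thesis by (simp add: rowof_def)
    qed
  qed
qed

lemma pair_tab_insert:
  assumes i: "i < m" "i \<notin> S"
  shows "pair_tab n m ps (insert i S) = tab_act (transpose (fst (ps ! i)) (snd (ps ! i))) (pair_tab n m ps S)"
proof -
  let ?t = "transpose (fst (ps ! i)) (snd (ps ! i))"
  have other: "?t (pair_entry ps S' k) = pair_entry ps S' k" if k: "k < m" "k \<noteq> i" for S' k
  proof -
    have k': "k < length ps" and i': "i < length ps" using k i lp by auto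
    have "fst (ps ! i) \<noteq> snd (ps ! k)" "fst (ps ! k) \<noteq> snd (ps ! i)"
      "fst (ps ! k) \<noteq> fst (ps ! i)" "snd (ps ! k) \<noteq> snd (ps ! i)"
      using distinct_flat_pairsD[OF dp k' i'] distinct_flat_pairsD[OF dp i' k'] k(2) by auto
    then show ?thesis
      by (simp add: pair_entry_def)
  qed
  have u: "?t (pair_entry ps (- S) k) = pair_entry ps (- insert i S) k" if k: "k < m" for k
    using other[OF k, of "- S"] i by (cases "k = i") (simp_all add: pair_entry_def)
  have w: "?t (pair_entry ps S k) = pair_entry ps (insert i S) k" if k: "k < m" for k
    using other[OF k, of S] i by (cases "k = i") (simp_all add: pair_entry_def)
  have r: "?t x = x" if "x \<in> set (pair_rest n m ps)" for x
  proof -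
    have "x \<noteq> fst (ps ! i)" "x \<noteq> snd (ps ! i)" using that set_pair_rest pair_mem i by auto
    then show ?thesis by simp
  qed
  have "map ?t (map (pair_entry ps (- S)) [0..<m]) = map (pair_entry ps (- insert i S)) [0..<m]" using u by simp
  moreover have "map ?t (map (pair_entry ps S) [0..<m]) = map (pair_entry ps (insert i S)) [0..<m]" using w by simp
  moreover have "map ?t (pair_rest n m ps) = pair_rest n m ps" using r by (simp add: map_idI)
  ultimately show ?thesis using lp by (simp add: pair_tab_def tab_act_def)
qed

lemma tab_sign_pair_tab:
  assumes "finite S" "S \<subseteq> {..<m}"
  shows "tab_sign (pair_tab n m ps S) = (-1)^card S * tab_sign (pair_tab n m ps {})"
  using assms
proof (induction S rule: finite_induct)
  case empty then show ?case by simp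
next
  case (insert i S)
  have i: "i < m" using insert by auto
  have p: "transpose (fst (ps ! i)) (snd (ps ! i)) permutes {1..n + m}"
    using permutes_swap_id pair_mem[OF i] sp by (metis subsetD)
  have "tab_sign (pair_tab n m ps (insert i S)) = sign (transpose (fst (ps ! i)) (snd (ps ! i))) * tab_sign (pair_tab n m ps S)"
    unfolding pair_tab_insert[OF i insert(2)]
    using tab_sign_tab_act2[OF p pair_tab_tabs] by simp
  also have "\<dots> = - tab_sign (pair_tab n m ps S)" using pair_fst_ne_snd[OF i] by (simp add: sign_swap_id)
  finally show ?case using insert by simp
qed

lemma same_rowof_pair_tab_nth:
  assumes T: "T \<in> tabs [n, m]" and r: "rowof T = rowof (pair_tab n m ps {})"
  defines "S \<equiv> {i. i < m \<and> T ! 0 ! i = fst (ps ! i)}"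
  shows "i < m \<Longrightarrow> T ! 0 ! i = pair_entry ps (- S) i"
    and "i < m \<Longrightarrow> T ! 1 ! i = pair_entry ps S i"
    and "m \<le> i \<Longrightarrow> i < n \<Longrightarrow> T ! 0 ! i = pair_rest n m ps ! (i - m)"
proof -
  let ?T0 = "pair_tab n m ps {}"
  note t = tabs2D[OF T]
  have pos0: "\<exists>c<2. i < length (?T0 ! c) \<and> ?T0 ! c ! i = T ! c' ! i"
    if "c' < 2" "i < length (T ! c')" for c' i
    using same_rowof_imp_same_row[OF T pair_tab_tabs r[symmetric] that] .
  have row: "T ! 0 ! i = pair_entry ps (- S) i \<and> T ! 1 ! i = pair_entry ps S i" if i: "i < m"
  proof -
    have l0: "i < length (T ! 0)" "i < length (T ! 1)"
      using i t(3,4) mn by auto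
    have e0: "?T0 ! 0 ! i = snd (ps ! i)" "?T0 ! 1 ! i = fst (ps ! i)"
      using pair_tab_nth(1,2)[OF i] by (auto simp: pair_entry_def)
    obtain c where c: "c < 2" "?T0 ! c ! i = T ! 0 ! i"
      using pos0[of 0 i] l0 by auto
    obtain c' where c': "c' < 2" "?T0 ! c' ! i = T ! 1 ! i"
      using pos0[of 1 i] l0 by auto
    have "T ! 0 ! i \<in> {fst (ps ! i), snd (ps ! i)}" "T ! 1 ! i \<in> {fst (ps ! i), snd (ps ! i)}"
      using c c' e0 by (auto simp: less_2_cases_iff)
    moreover have "T ! 0 ! i \<noteq> T ! 1 ! i"
      using t(7) l0 by (metis disjoint_iff nth_mem)
    ultimately show ?thesis
      using pair_fst_ne_snd[OF i] i by (auto simp: S_def pair_entry_def)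
  qed
  then show "i < m \<Longrightarrow> T ! 0 ! i = pair_entry ps (- S) i" "i < m \<Longrightarrow> T ! 1 ! i = pair_entry ps S i"
    by blast+
  show "T ! 0 ! i = pair_rest n m ps ! (i - m)" if i: "m \<le> i" "i < n"
  proof -
    obtain c where c: "c < 2" "i < length (?T0 ! c)" "?T0 ! c ! i = T ! 0 ! i"
      using pos0[of 0 i] i t(3) by auto
    have "c = 0"
      using c pair_tab_len i by (cases c) auto
    then show ?thesis
      using c pair_tab_nth(3)[OF i] by simp
  qed
qed

lemma pair_tab_onto:
  assumes T: "T \<in> tabs [n, m]" and r: "rowof T = rowof (pair_tab n m ps {})"
  shows "T = pair_tab n m ps {i. i < m \<and> T ! 0 ! i = fst (ps ! i)}"
proof -
  let ?S = "{i. i < m \<and> T ! 0 ! i = fst (ps ! i)}"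
  note t = tabs2D[OF T] and nth = same_rowof_pair_tab_nth[OF T r]
  have "T ! 0 = pair_tab n m ps ?S ! 0"
  proof (rule nth_equalityI)
    show "length (T ! 0) = length (pair_tab n m ps ?S ! 0)"
      using t(3) pair_tab_len by simp
    fix i assume i: "i < length (T ! 0)"
    show "T ! 0 ! i = pair_tab n m ps ?S ! 0 ! i"
    proof (cases "i < m")
      case True
      then show ?thesis using nth(1) pair_tab_nth(1) by simp
    next
      case False
      then have "m \<le> i" "i < n" using i t(3) by auto
      then show ?thesis using nth(3) pair_tab_nth(3) by simp
    qed
  qed
  moreover have "T ! 1 = pair_tab n m ps ?S ! 1"
    by (rule nth_equalityI) (use t(4) pair_tab_len nth(2) pair_tab_nth in auto)
  ultimately have "[T ! 0, T ! 1] = [pair_tab n m ps ?S ! 0, pair_tab n m ps ?S ! 1]"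
    by simp
  moreover have "pair_tab n m ps ?S = [pair_tab n m ps ?S ! 0, pair_tab n m ps ?S ! 1]"
    by (rule tabs2D(1)[OF pair_tab_tabs])
  ultimately show ?thesis
    by (subst t(1)) simp
qed

lemma inj_on_pair_tab: "inj_on (pair_tab n m ps) (Pow {..<m})"
proof (rule inj_onI)
  fix S S' assume S: "S \<in> Pow {..<m}" and S': "S' \<in> Pow {..<m}" and e: "pair_tab n m ps S = pair_tab n m ps S'"
  have "i \<in> S \<longleftrightarrow> i \<in> S'" if i: "i < m" for i
  proof -
    have "pair_entry ps (- S) i = pair_entry ps (- S') i" using pair_tab_nth(1)[OF i, of S] pair_tab_nth(1)[OF i, of S'] e by simp
    then show ?thesis using pair_fst_ne_snd[OF i] by (auto simp: pair_entry_def split: if_splits)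
  qed
  then show "S = S'" using S S' by auto
qed

lemma set_pair_tab_col: "set (pair_tab n m ps S ! 1) = pick ps S"
  using lp by (auto simp: pair_tab_def pick_def pair_entry_def atLeast0LessThan)

lemma bij_betw_pair_tab:
  "bij_betw (pair_tab n m ps) (Pow {..<m}) {T \<in> tabs [n, m]. rowof T = rowof (pair_tab n m ps {})}"
proof (rule bij_betw_imageI[OF inj_on_pair_tab])
  show "pair_tab n m ps ` Pow {..<m} = {T \<in> tabs [n, m]. rowof T = rowof (pair_tab n m ps {})}"
  proof (intro equalityI subsetI)
    fix T assume "T \<in> pair_tab n m ps ` Pow {..<m}"
    then obtain S where "T = pair_tab n m ps S"
      by blast
    then show "T \<in> {T \<in> tabs [n, m]. rowof T = rowof (pair_tab n m ps {})}"
      using pair_tab_tabs rowof_pair_tab by simp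
  next
    fix T assume "T \<in> {T \<in> tabs [n, m]. rowof T = rowof (pair_tab n m ps {})}"
    then have "T = pair_tab n m ps {i. i < m \<and> T ! 0 ! i = fst (ps ! i)}"
      by (intro pair_tab_onto) auto
    then show "T \<in> pair_tab n m ps ` Pow {..<m}"
      by (rule image_eqI) auto
  qed
qed

lemma alpha_pair_tab:
  "alpha [n, m] f (rowof (pair_tab n m ps {}))
    = of_int (tab_sign (pair_tab n m ps {})) * alt_sum (col_coeff n m f) ps"
proof -
  let ?v = "col_coeff n m f" and ?s = "of_int (tab_sign (pair_tab n m ps {})) :: complex"
  have "alpha [n, m] f (rowof (pair_tab n m ps {}))
      = (\<Sum>S\<in>Pow {..<m}. of_int (tab_sign (pair_tab n m ps S)) * ?v (set (pair_tab n m ps S ! 1)))"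
    unfolding alpha_eq_sum_rowof by (rule sum.reindex_bij_betw[OF bij_betw_pair_tab, symmetric])
  also have "\<dots> = (\<Sum>S\<in>Pow {..<m}. ?s * ((-1) ^ card S * ?v (pick ps S)))"
  proof (rule sum.cong[OF refl])
    fix S assume "S \<in> Pow {..<m}"
    then have S: "S \<subseteq> {..<m}"
      by simp
    then have "tab_sign (pair_tab n m ps S) = (-1) ^ card S * tab_sign (pair_tab n m ps {})"
      by (intro tab_sign_pair_tab finite_subset[OF S]) simp_all
    then show "of_int (tab_sign (pair_tab n m ps S)) * ?v (set (pair_tab n m ps S ! 1))
        = ?s * ((-1) ^ card S * ?v (pick ps S))"
      unfolding set_pair_tab_col by (simp add: mult_ac)
  qed
  also have "\<dots> = ?s * alt_sum ?v ps"
    unfolding alt_sum_def lp by (simp add: sum_distrib_left)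
  finally show ?thesis .
qed

end

lemma Rel_if_eta_Rel_alpha_eq_0:
  assumes mn: "m \<le> n" and f: "f \<in> Fsp [n, m]" and eta: "eta n m f \<in> Rel [n, m]"
    and alpha: "alpha [n, m] f = (\<lambda>r. 0)"
  shows "f \<in> Rel [n, m]"
proof -
  let ?X = "{1..n + m}" and ?v = "col_coeff n m f"
  have "gram ?X m ?v = (\<lambda>_. 0)"
    using eta Rel_iff_col_coeff_eq_0[OF eta_Fsp] by (simp add: col_coeff_eta fun_eq_iff)
  then have harm: "harmonic ?X m ?v"
    by (simp add: harmonic_if_gram_eq_0)
  have "?v B = 0" if B: "B \<in> ksubsets ?X m" for B
  proof (rule harmonic_eq_0_if_alt_sums_eq_0[OF _ harm])
    fix ps :: "(nat \<times> nat) list"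
    assume ps: "length ps = m" "distinct (flat_pairs ps)" "set (flat_pairs ps) \<subseteq> ?X"
    have "of_int (tab_sign (pair_tab n m ps {})) * alt_sum ?v ps = 0"
      using alpha_pair_tab[OF ps mn, of f] alpha by simp
    then show "alt_sum ?v ps = 0"
      by (simp add: tab_sign_neq_0)
  qed (use B in \<open>auto simp: ksubsets_def\<close>)
  then have "?v B = 0" for B
    using col_coeff_outside by metis
  then show ?thesis
    using Rel_iff_col_coeff_eq_0[OF f] by simp
qed

lemma alpha_eq_0_iff_Rel:
  assumes "m \<le> n" "f \<in> Fsp [n, m]" "eta n m f \<in> Rel [n, m]"
  shows "alpha [n, m] f = (\<lambda>r. 0) \<longleftrightarrow> f \<in> Rel [n, m]"
  using Rel_if_eta_Rel_alpha_eq_0[OF assms] alpha_Rel by blast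

section \<open>Equivariance and image of \<open>alpha\<close>\<close>

lemma basis_polytab_image:
  assumes s: "s permutes {1..n + m}"
  shows "basis_polytab n m (s ` B) r = of_int (sign s) * basis_polytab n m B (r \<circ> s)"
proof -
  let ?A = "{T \<in> tabs [n, m]. rowof T = r \<circ> s \<and> set (T ! 1) = B}"
  let ?A' = "{T \<in> tabs [n, m]. rowof T = r \<and> set (T ! 1) = s ` B}"
  have s_inv: "s \<circ> inv s = id" "inv s \<circ> s = id" "inv s permutes {1..n + m}"
    using permutes_inv_o[OF s] permutes_inv[OF s] by auto
  have act: "tab_act t T \<in> tabs [n, m]" "rowof (tab_act t T) = rowof T \<circ> inv t"
    "set (tab_act t T ! 1) = t ` set (T ! 1)"
    if "t permutes {1..n + m}" "T \<in> tabs [n, m]" for t T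
    using that tab_act_tabs2 rowof_tab_act_eq_comp set_tab_act_nth[of T n m 1 t] by auto
  have "bij_betw (tab_act s) ?A ?A'"
  proof (rule bij_betw_byWitness[where f'="tab_act (inv s)"])
    show "tab_act s ` ?A \<subseteq> ?A'"
      using act[OF s] s_inv by (auto simp: comp_assoc)
    show "tab_act (inv s) ` ?A' \<subseteq> ?A"
      using act[OF s_inv(3)] s_inv inv_inv_eq[OF permutes_bij[OF s]] by (auto simp: image_comp)
  qed (simp_all add: tab_act_comp s_inv)
  then have "basis_polytab n m (s ` B) r = (\<Sum>T\<in>?A. of_int (tab_sign (tab_act s T)))"
    unfolding basis_polytab_def by (rule sum.reindex_bij_betw[symmetric])
  also have "\<dots> = (\<Sum>T\<in>?A. of_int (sign s) * of_int (tab_sign T))"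
    using tab_sign_tab_act2[OF s] by (intro sum.cong refl) simp
  also have "\<dots> = of_int (sign s) * basis_polytab n m B (r \<circ> s)"
    by (simp add: basis_polytab_def sum_distrib_left)
  finally show ?thesis .
qed

lemma polytab_tab_act:
  assumes s: "s permutes {1..n + m}" and T: "T \<in> tabs [n, m]"
  shows "polytab (tab_act s T) r = polytab T (r \<circ> s)"
proof -
  have "tab_act s T \<in> tabs [n, m]" "set (tab_act s T ! 1) = s ` set (T ! 1)"
    using tab_act_tabs2[OF s T] set_tab_act_nth[OF T, of 1 s] by simp_all
  moreover have "tab_sign (tab_act s T) = sign s * tab_sign T"
    using tab_sign_tab_act2[OF s T] by simp
  moreover have "(of_int (sign s) * of_int (sign s) :: complex) = 1"
    by (simp flip: of_int_mult)
  ultimately show ?thesis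
    using polytab_eq_basis_polytab[OF T] polytab_eq_basis_polytab basis_polytab_image[OF s]
    by (simp add: mult_ac)
qed

lemma alpha_actF:
  assumes s: "s permutes {1..n + m}"
  shows "alpha [n, m] (actF s f) = actM s (alpha [n, m] f)"
proof
  fix r
  have s_inv: "inv s \<circ> s = id" "inv s permutes {1..n + m}"
    using permutes_inv_o[OF s] permutes_inv[OF s] by auto
  have "bij_betw (tab_act s) (tabs [n, m]) (tabs [n, m])"
    by (rule bij_betw_byWitness[where f'="tab_act (inv s)"])
       (use s s_inv permutes_inv_o[OF s] tab_act_tabs2[OF s] tab_act_tabs2[OF s_inv(2)]
         in \<open>auto simp: tab_act_comp\<close>)
  then have "alpha [n, m] (actF s f) r
      = (\<Sum>T\<in>tabs [n, m]. f (tab_act (inv s) (tab_act s T)) * polytab (tab_act s T) r)"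
    unfolding alpha_def actF_def by (rule sum.reindex_bij_betw[symmetric])
  also have "\<dots> = (\<Sum>T\<in>tabs [n, m]. f T * polytab T (r \<circ> s))"
    by (intro sum.cong refl) (simp add: tab_act_comp s_inv polytab_tab_act[OF s])
  finally show "alpha [n, m] (actF s f) r = actM s (alpha [n, m] f) r"
    by (simp add: actM_def alpha_def)
qed

lemma alpha_Specht: "alpha [n, m] f \<in> Specht [n, m]"
  unfolding Specht_def alpha_def
  by (intro cspan_sum[OF finite_tabs] cspan_scale cspan_base) blast

lemma Specht_subset_alpha_image: "Specht cols \<subseteq> alpha cols ` Fsp cols"
proof
  fix w assume "w \<in> Specht cols"
  then obtain F c where F: "finite F" "F \<subseteq> {polytab T | T. T \<in> tabs cols}" "w = (\<lambda>s. \<Sum>a\<in>F. c a * a s)"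
    unfolding Specht_def by (rule cspan_elim)
  define tab where "tab a = (SOME T. T \<in> tabs cols \<and> a = polytab T)" for a
  have tab: "tab a \<in> tabs cols" "a = polytab (tab a)" if "a \<in> F" for a
  proof -
    have "\<exists>T. T \<in> tabs cols \<and> a = polytab T"
      using that F(2) by blast
    then show "tab a \<in> tabs cols" "a = polytab (tab a)"
      unfolding tab_def by (metis (mono_tags, lifting) someI_ex)+
  qed
  define f where "f S = (\<Sum>a\<in>F. c a * delta (tab a) S)" for S
  have "f \<in> Fsp cols"
    unfolding Fsp_def f_def using tab by (auto simp: delta_def intro!: sum.neutral)
  moreover have "alpha cols f r = w r" for r
  proof -
    have "alpha cols f r = (\<Sum>a\<in>F. c a * alpha cols (delta (tab a)) r)"
      unfolding f_def[abs_def] by (simp add: alpha_sum alpha_scale)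
    also have "\<dots> = w r"
      unfolding F(3) using tab by (intro sum.cong refl) (simp add: alpha_delta)
    finally show ?thesis .
  qed
  ultimately show "w \<in> alpha cols ` Fsp cols"
    by (metis ext image_eqI)
qed

lemma alpha_image_eta_Rel:
  assumes "m \<le> n"
  shows "alpha [n, m] ` {f \<in> Fsp [n, m]. eta n m f \<in> Rel [n, m]} = Specht [n, m]"
proof
  show "Specht [n, m] \<subseteq> alpha [n, m] ` {f \<in> Fsp [n, m]. eta n m f \<in> Rel [n, m]}"
  proof
    fix w assume "w \<in> Specht [n, m]"
    then obtain f where f: "f \<in> Fsp [n, m]" "alpha [n, m] f = w"
      using Specht_subset_alpha_image by blast
    then obtain g where g: "g \<in> Fsp [n, m]" "eta n m (\<lambda>S. f S - eta n m g S) \<in> Rel [n, m]"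
      using exists_eta_Rel_diff_eta by blast
    have "alpha [n, m] (\<lambda>S. f S - eta n m g S) = w"
      using f(2) alpha_eta[OF assms] by (simp add: alpha_diff)
    then show "w \<in> alpha [n, m] ` {f \<in> Fsp [n, m]. eta n m f \<in> Rel [n, m]}"
      using f(1) g(2) Fsp_diff[OF f(1) eta_Fsp] by (auto intro!: image_eqI)
  qed
qed (use alpha_Specht in blast)

lemma ker_alpha_eq:
  assumes "m \<le> n"
  shows "{f \<in> Fsp [n, m]. alpha [n, m] f = (\<lambda>r. 0)}
       = {(\<lambda>S. eta n m g S + h S) | g h. g \<in> Fsp [n, m] \<and> h \<in> Rel [n, m]}"
proof (intro equalityI subsetI)
  fix f assume "f \<in> {f \<in> Fsp [n, m]. alpha [n, m] f = (\<lambda>r. 0)}"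
  then have f: "f \<in> Fsp [n, m]" "alpha [n, m] f = (\<lambda>r. 0)" by auto
  then obtain g where g: "g \<in> Fsp [n, m]" "eta n m (\<lambda>S. f S - eta n m g S) \<in> Rel [n, m]"
    using exists_eta_Rel_diff_eta by blast
  have "alpha [n, m] (\<lambda>S. f S - eta n m g S) = (\<lambda>r. 0)"
    using f(2) alpha_eta[OF assms] by (simp add: alpha_diff)
  then have "(\<lambda>S. f S - eta n m g S) \<in> Rel [n, m]"
    using Rel_if_eta_Rel_alpha_eq_0[OF assms Fsp_diff[OF f(1) eta_Fsp] g(2)] by blast
  moreover have "f = (\<lambda>S. eta n m g S + (f S - eta n m g S))"
    by simp
  ultimately show "f \<in> {(\<lambda>S. eta n m g S + h S) | g h. g \<in> Fsp [n, m] \<and> h \<in> Rel [n, m]}"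
    using g(1) unfolding mem_Collect_eq by (intro exI[of _ g] exI[of _ "\<lambda>S. f S - eta n m g S"]) simp
next
  fix f assume "f \<in> {(\<lambda>S. eta n m g S + h S) | g h. g \<in> Fsp [n, m] \<and> h \<in> Rel [n, m]}"
  then obtain g h where gh: "h \<in> Rel [n, m]" "f = (\<lambda>S. eta n m g S + h S)"
    by blast
  then show "f \<in> {f \<in> Fsp [n, m]. alpha [n, m] f = (\<lambda>r. 0)}"
    using Fsp_add[OF eta_Fsp subsetD[OF Rel_subset_Fsp gh(1)]] alpha_Rel[OF gh(1)] alpha_eta[OF assms]
    by (simp add: alpha_add)
qed

theorem mainTheorem3:
  fixes n m :: nat
  assumes "1 \<le> m" and "m \<le> n"
  shows "(\<exists>\<phi> :: (nat list list \<Rightarrow> complex) \<Rightarrow> ((nat \<Rightarrow> nat) \<Rightarrow> complex).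
            (\<forall>f\<in>Fsp [n, m]. \<forall>g\<in>Fsp [n, m].
                \<phi> (\<lambda>S. f S + g S) = (\<lambda>r. \<phi> f r + \<phi> g r)) \<and>
            (\<forall>c. \<forall>f\<in>Fsp [n, m]. \<phi> (\<lambda>S. c * f S) = (\<lambda>r. c * \<phi> f r)) \<and>
            (\<forall>s. \<forall>f\<in>Fsp [n, m]. s permutes {1..n+m} \<longrightarrow> \<phi> (actF s f) = actM s (\<phi> f)) \<and>
            \<phi> ` {f \<in> Fsp [n, m]. eta n m f \<in> Rel [n, m]} = Specht [n, m] \<and>
            (\<forall>f\<in>Fsp [n, m]. eta n m f \<in> Rel [n, m] \<longrightarrow>
                (\<phi> f = (\<lambda>r. 0) \<longleftrightarrow> f \<in> Rel [n, m])))
       \<and> {f \<in> Fsp [n, m]. alpha [n, m] f = (\<lambda>r. 0)}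
           = {(\<lambda>S. eta n m g S + h S) | g h. g \<in> Fsp [n, m] \<and> h \<in> Rel [n, m]}"
  using alpha_eq_0_iff_Rel[OF assms(2)] ker_alpha_eq[OF assms(2)]
  by (intro conjI exI[of _ "alpha [n, m]"])
     (simp_all add: alpha_add alpha_scale alpha_actF alpha_image_eta_Rel[OF assms(2)])

end
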